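(* Let $X=\{k^2:k\in\mathbb N\}\subset\mathbb R$ with the metric $d_X(x,y)=|x-y|$, write $x^k=k^2$, and let $X_n=\{x^k_n:k\in\mathbb N\}$, $n\in\overline{\mathbb N}$, be copies of $X$ realized in the Banach space $\ell_1(\overline{\mathbb N})$ (with standard unit vectors $e_0,e_1,\dots$) by $x^k_0=k^2e_0$, and for $n\ge1$: $x^k_n=k^2e_0+e_n$ if $k\ge n$, $x^k_n=(k^2+n)e_n$ if $k<n$. Let $d$ be the metric on $X_0\sqcup\bigsqcup_{n\ge1}X_n$ induced by the $\ell_1$-norm (so $d$ restricts to $d_X$ on $X_0=X$, $d(x^k_0,x^k_n)=1$ for $k\ge n$, and $d(x_0^k,x_n^k)\to\infty$ as $n\to\infty$). Then, with $Y=\bigsqcup_{n\ge1}X_n\cong X\times\mathbb N$ and the identification $T\leftrightarrow(T_n)_{n\in\mathbb N}$, $$M_{Y,d}=\ell_2(\mathbb K(H_X))+\ell_2(\mathbb D(H_X))'_0,$$ i.e. $M_{Y,d}$ is exactly the set of sums $K+D$ with $K\in\ell_2(\mathbb K(H_X))$ and $D\in\ell_2(\mathbb D(H_X))'_0$.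
   Context: $\overline{\mathbb N}=\mathbb N\cup\{0\}$. $H_Z=\ell^2(Z)$ with standard basis. For a metric $d$ on $X\sqcup Y$ extending $d_X$, $M_{Y,d}$ is the norm closure in $\mathbb B(H_X,H_Y)$ of bounded operators $T:H_X\to H_Y$ of finite propagation (there is $L$ with $(\delta_y,T\delta_x)=0$ whenever $d(x,y)\ge L$). $H_Y=\bigoplus_{n\ge1}H_{X_n}$; $T_n=Q_nT$ with $Q_n$ the projection onto $H_{X_n}$, regarded as an operator on $H_X$ via $\delta_{x^k_n}\leftrightarrow\delta_{x^k}$. $\mathbb K(H_X)$ denotes compact operators and $\mathbb D(H_X)$ the diagonal operators (with respect to $\{\delta_{x^k}\}$). For a $C^*$-algebra $A\subset\mathbb B(H_X)$, $\ell_2(A)$ is the set of sequences $(a_n)$ in $A$ with $\sum a_n^*a_n$ norm convergent, and $\ell_2(A)'$ the set of sequences $(a_n)$ in $A$ with uniformly bounded partial sums $\|\sum_{n=1}^m a_n^*a_n\|$; both are identified with sets of bounded operators $H_X\to H_Y$. $\ell_2(\mathbb D(H_X))'_0$ is the set of $(D_n)\in\ell_2(\mathbb D(H_X))'$ with $D_n=\mathrm{diag}(d^1_n,d^2_n,\dots)$ and $d^i_n=0$ for all $i<n$. *)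

theory Defs
  imports "HOL-Analysis.Analysis" "HOL-Library.Function_Algebras"
begin

text \<open>A bounded operator T : l2(Z1) -> l2(Z2) is represented by its matrix
 m z2 z1 = (delta_z2, T delta_z1); T f is then given row-wise by
 (T f) z2 = sum over z1 of m z2 z1 * f z1.\<close>

definition l2 :: "('a \<Rightarrow> complex) set" where
  "l2 = {f. (\<lambda>x. (cmod (f x))^2) summable_on UNIV}"

definition l2norm :: "('a \<Rightarrow> complex) \<Rightarrow> real" where
  "l2norm f = sqrt (infsum (\<lambda>x. (cmod (f x))^2) UNIV)"

definition mat_apply :: "('b \<Rightarrow> 'a \<Rightarrow> complex) \<Rightarrow> ('a \<Rightarrow> complex) \<Rightarrow> ('b \<Rightarrow> complex)" where
  "mat_apply m f = (\<lambda>y. infsum (\<lambda>x. m y x * f x) UNIV)"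

definition bounded_mat :: "('b \<Rightarrow> 'a \<Rightarrow> complex) \<Rightarrow> bool" where
  "bounded_mat m \<longleftrightarrow>
     (\<forall>f\<in>l2. \<forall>y. (\<lambda>x. m y x * f x) summable_on UNIV) \<and>
     (\<exists>C. \<forall>f\<in>l2. mat_apply m f \<in> l2 \<and> l2norm (mat_apply m f) \<le> C * l2norm f)"

definition opnorm :: "('b \<Rightarrow> 'a \<Rightarrow> complex) \<Rightarrow> real" where
  "opnorm m = Sup {l2norm (mat_apply m f) | f. f \<in> l2 \<and> l2norm f \<le> 1}"

definition mat_mult :: "('c \<Rightarrow> 'b \<Rightarrow> complex) \<Rightarrow> ('b \<Rightarrow> 'a \<Rightarrow> complex) \<Rightarrow> ('c \<Rightarrow> 'a \<Rightarrow> complex)" where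
  "mat_mult a b = (\<lambda>i j. infsum (\<lambda>l. a i l * b l j) UNIV)"

definition mat_adj :: "('b \<Rightarrow> 'a \<Rightarrow> complex) \<Rightarrow> ('a \<Rightarrow> 'b \<Rightarrow> complex)" where
  "mat_adj a = (\<lambda>i j. cnj (a j i))"

text \<open>Compact operators: bounded, and the image of the unit ball is relatively
 compact, i.e. (l2 being complete) totally bounded.\<close>
definition compact_mat :: "('b \<Rightarrow> 'a \<Rightarrow> complex) \<Rightarrow> bool" where
  "compact_mat m \<longleftrightarrow> bounded_mat m \<and>
     (\<forall>e>0. \<exists>F. finite F \<and> F \<subseteq> l2 \<and>
        (\<forall>f\<in>l2. l2norm f \<le> 1 \<longrightarrow> (\<exists>g\<in>F. l2norm (mat_apply m f - g) < e)))"

definition diag_mat :: "('a \<Rightarrow> 'a \<Rightarrow> complex) \<Rightarrow> bool" where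
  "diag_mat m \<longleftrightarrow> bounded_mat m \<and> (\<forall>i j. i \<noteq> j \<longrightarrow> m i j = 0)"

text \<open>Points of l1(N-bar) are finitely supported functions nat => real;
 coordinate i corresponds to the unit vector e_i.  The indices k, n of the
 paper range over N = {1,2,...}.\<close>

definition l1dist :: "(nat \<Rightarrow> real) \<Rightarrow> (nat \<Rightarrow> real) \<Rightarrow> real" where
  "l1dist p q = infsum (\<lambda>i. \<bar>p i - q i\<bar>) UNIV"

definition xpt0 :: "nat \<Rightarrow> (nat \<Rightarrow> real)" where
  "xpt0 k = (\<lambda>i. if i = 0 then real (k^2) else 0)"

definition xpt :: "nat \<Rightarrow> nat \<Rightarrow> (nat \<Rightarrow> real)" where
  "xpt n k = (if n \<le> k
      then (\<lambda>i. if i = 0 then real (k^2) else if i = n then 1 else 0)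
      else (\<lambda>i. if i = n then real (k^2 + n) else 0))"

text \<open>Indexing convention (0-based): the basis vector with index j :: nat of
 H_X is delta_{x^(j+1)}; the basis vector with index (n', j) :: nat \<times> nat of
 H_Y is delta_{x^(j+1)_(n'+1)}.\<close>
definition dXY :: "nat \<Rightarrow> nat \<times> nat \<Rightarrow> real" where
  "dXY j y = l1dist (xpt0 (Suc j)) (xpt (Suc (fst y)) (Suc (snd y)))"

definition finite_prop :: "(nat \<times> nat \<Rightarrow> nat \<Rightarrow> complex) \<Rightarrow> bool" where
  "finite_prop T \<longleftrightarrow> (\<exists>L. \<forall>j y. dXY j y \<ge> L \<longrightarrow> T y j = 0)"

definition M_Yd :: "(nat \<times> nat \<Rightarrow> nat \<Rightarrow> complex) set" where
  "M_Yd = {T. bounded_mat T \<and>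
     (\<forall>e>0. \<exists>S. bounded_mat S \<and> finite_prop S \<and> opnorm (T - S) < e)}"

text \<open>T_n = Q_n T, regarded as an operator on H_X (0-based n).\<close>
definition slice :: "(nat \<times> nat \<Rightarrow> nat \<Rightarrow> complex) \<Rightarrow> nat \<Rightarrow> (nat \<Rightarrow> nat \<Rightarrow> complex)" where
  "slice T n = (\<lambda>j' j. T (n, j') j)"

definition l2_compact :: "(nat \<times> nat \<Rightarrow> nat \<Rightarrow> complex) set" where
  "l2_compact = {T. (\<forall>n. compact_mat (slice T n)) \<and>
     (\<exists>S. bounded_mat S \<and>
        (\<lambda>N. opnorm ((\<Sum>n<N. mat_mult (mat_adj (slice T n)) (slice T n)) - S))
          \<longlonglongrightarrow> 0)}"

text \<open>l2(D(H_X))'_0: all T_n diagonal, with d^i_n = 0 for i < n (in 0-based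
 indices: entry j of slice n' vanishes for j < n'), and partial sums of
 T_n* T_n uniformly bounded in norm.\<close>
definition l2_diag0 :: "(nat \<times> nat \<Rightarrow> nat \<Rightarrow> complex) set" where
  "l2_diag0 = {T. (\<forall>n. diag_mat (slice T n)) \<and>
     (\<forall>n j. j < n \<longrightarrow> T (n, j) j = 0) \<and>
     (\<exists>C. \<forall>N. opnorm (\<Sum>n<N. mat_mult (mat_adj (slice T n)) (slice T n)) \<le> C)}"

end

theory Submission
  imports Defs
begin

text \<open>Call the entries of T that pair x^l with x^l_n, n \<le> l, its band: these pairs are at
distance 1. Every other pair at distance below L has all its indices below L, because
\<bar>(j+1)^2 - (l+1)^2\<bar> > max j l. Hence an operator of finite propagation is a band operator plus a
finitely supported one, and conversely such sums have finite propagation; so M_{Y,d} consists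
of the sums K + D with D a bounded band operator, which is what l2(D(H_X))'_0 describes, and
K a norm limit of finitely supported matrices. These limits are exactly l2(K(H_X)): compact
operators are the norm limits of finitely supported matrices, and the tail after N of the
series \<Sum> T_n^* T_n is the Gram matrix of the rows of T beyond N, whose norm tends to 0 precisely
when T is such a limit.\<close>

section \<open>Square-summable vectors\<close>

definition restr :: "'a set \<Rightarrow> ('a \<Rightarrow> complex) \<Rightarrow> ('a \<Rightarrow> complex)" where
  "restr F f = (\<lambda>x. if x \<in> F then f x else 0)"

definition l2_inner :: "('a \<Rightarrow> complex) \<Rightarrow> ('a \<Rightarrow> complex) \<Rightarrow> complex" where
  "l2_inner u v = infsum (\<lambda>x. cnj (u x) * v x) UNIV"

definition l2_normsq :: "('a \<Rightarrow> complex) \<Rightarrow> real" where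
  "l2_normsq f = infsum (\<lambda>x. (cmod (f x))^2) UNIV"

definition unit_vec :: "'a \<Rightarrow> ('a \<Rightarrow> complex)" where
  "unit_vec a = (\<lambda>x. if x = a then 1 else 0)"

lemma l2_normsq_nonneg: "0 \<le> l2_normsq f" unfolding l2_normsq_def by (rule infsum_nonneg) auto

lemma l2norm_eq_sqrt: "l2norm f = sqrt (l2_normsq f)" by (simp add: l2norm_def l2_normsq_def)

lemma l2norm_nonneg: "0 \<le> l2norm f" by (simp add: l2norm_eq_sqrt l2_normsq_nonneg)

lemma l2norm_power2: "(l2norm f)^2 = l2_normsq f" by (simp add: l2norm_eq_sqrt l2_normsq_nonneg)

lemma sum_sq_le_l2_normsq: "f \<in> l2 \<Longrightarrow> finite F \<Longrightarrow> (\<Sum>x\<in>F. (cmod (f x))^2) \<le> l2_normsq f"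
  unfolding l2_def l2_normsq_def by (intro finite_sum_le_infsum) auto

lemma l2_if_sum_sq_bounded:
  assumes "\<And>F. finite F \<Longrightarrow> (\<Sum>x\<in>F. (cmod (f x))^2) \<le> B"
  shows "f \<in> l2" "l2_normsq f \<le> B"
proof -
  have s: "(\<lambda>x. (cmod (f x))^2) summable_on UNIV"
    by (rule nonneg_bdd_above_summable_on) (use assms in \<open>auto intro!: bdd_aboveI2\<close>)
  then show "f \<in> l2" by (simp add: l2_def)
  show "l2_normsq f \<le> B" unfolding l2_normsq_def using s by (rule infsum_le_finite_sums) (use assms in auto)
qed

lemma l2norm_le_if_sum_sq_le:
  assumes "\<And>F. finite F \<Longrightarrow> (\<Sum>x\<in>F. (cmod (g x))^2) \<le> B^2" "0 \<le> B"
  shows "g \<in> l2" "l2norm g \<le> B"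
proof -
  from l2_if_sum_sq_bounded[OF assms(1)] show "g \<in> l2" by auto
  from l2_if_sum_sq_bounded[OF assms(1)] have "l2_normsq g \<le> B^2" by auto
  then have "sqrt (l2_normsq g) \<le> sqrt (B^2)" by (rule real_sqrt_le_mono)
  then show "l2norm g \<le> B" using assms(2) by (simp add: l2norm_eq_sqrt)
qed

lemma L2_set_le_l2norm: "f \<in> l2 \<Longrightarrow> finite F \<Longrightarrow> L2_set (\<lambda>x. cmod (f x)) F \<le> l2norm f"
  unfolding L2_set_def l2norm_eq_sqrt by (intro real_sqrt_le_mono sum_sq_le_l2_normsq)

lemma sum_power2_eq_L2_set: "(\<Sum>x\<in>F. (h x)^2) = (L2_set h F)^2"
  unfolding L2_set_def by (simp add: sum_nonneg)

lemma l2norm_le_if_L2_set_le: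
  assumes "\<And>F. finite F \<Longrightarrow> L2_set (\<lambda>x. cmod (g x)) F \<le> B" "0 \<le> B"
  shows "g \<in> l2" "l2norm g \<le> B"
proof -
  have "(\<Sum>x\<in>F. (cmod (g x))^2) \<le> B^2" if "finite F" for F
    unfolding sum_power2_eq_L2_set using assms(1)[OF that] by (intro power_mono) auto
  then show "g \<in> l2" "l2norm g \<le> B" using l2norm_le_if_sum_sq_le[of g B] assms(2) by auto
qed

lemma l2_add:
  assumes "f \<in> l2" "g \<in> l2"
  shows "f + g \<in> l2" "l2norm (f + g) \<le> l2norm f + l2norm g"
proof -
  have "L2_set (\<lambda>x. cmod ((f+g) x)) F \<le> l2norm f + l2norm g" if "finite F" for F
  proof -
    have "L2_set (\<lambda>x. cmod ((f+g) x)) F \<le> L2_set (\<lambda>x. cmod (f x) + cmod (g x)) F"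
      by (rule L2_set_mono) (auto simp: norm_triangle_ineq)
    also have "\<dots> \<le> L2_set (\<lambda>x. cmod (f x)) F + L2_set (\<lambda>x. cmod (g x)) F"
      by (rule L2_set_triangle_ineq)
    also have "\<dots> \<le> l2norm f + l2norm g"
      using L2_set_le_l2norm[OF assms(1) that] L2_set_le_l2norm[OF assms(2) that] by simp
    finally show ?thesis .
  qed
  moreover have "0 \<le> l2norm f + l2norm g" by (simp add: l2norm_nonneg add_nonneg_nonneg)
  ultimately show "f + g \<in> l2" "l2norm (f + g) \<le> l2norm f + l2norm g"
    using l2norm_le_if_L2_set_le[of "f+g" "l2norm f + l2norm g"] by auto
qed

lemma l2_normsq_scale: "l2_normsq (\<lambda>x. c * f x) = (cmod c)^2 * l2_normsq f"
  unfolding l2_normsq_def by (simp add: norm_mult power_mult_distrib infsum_cmult_right')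

lemma l2norm_scale: "l2norm (\<lambda>x. c * f x) = cmod c * l2norm f"
  by (simp add: l2norm_eq_sqrt l2_normsq_scale real_sqrt_mult)

lemma l2_scale: "f \<in> l2 \<Longrightarrow> (\<lambda>x. c * f x) \<in> l2"
  unfolding l2_def by (simp add: norm_mult power_mult_distrib summable_on_cmult_right)

lemma l2_uminus: "f \<in> l2 \<Longrightarrow> - f \<in> l2"
  unfolding l2_def by simp

lemma l2norm_uminus: "l2norm (- f) = l2norm f"
  unfolding l2norm_def by simp

lemma l2_diff:
  assumes "f \<in> l2" "g \<in> l2"
  shows "f - g \<in> l2" "l2norm (f - g) \<le> l2norm f + l2norm g"
  using l2_add[OF assms(1) l2_uminus[OF assms(2)]] by (auto simp: l2norm_uminus)

lemma l2norm_triangle_diff: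
  assumes "f \<in> l2" "g \<in> l2" "h \<in> l2"
  shows "l2norm (f - h) \<le> l2norm (f - g) + l2norm (g - h)"
proof -
  have "f - h = (f - g) + (g - h)" by simp
  then show ?thesis using l2_add[OF l2_diff(1)[OF assms(1,2)] l2_diff(1)[OF assms(2,3)]] by simp
qed

lemma l2_zero[simp]: "(0 :: 'a \<Rightarrow> complex) \<in> l2"
  unfolding l2_def by simp

lemma l2norm_zero[simp]: "l2norm (0 :: 'a \<Rightarrow> complex) = 0"
  unfolding l2norm_def by simp

lemma l2_cnj: "f \<in> l2 \<Longrightarrow> (\<lambda>x. cnj (f x)) \<in> l2"
  unfolding l2_def by simp

lemma l2norm_cnj: "l2norm (\<lambda>x. cnj (f x)) = l2norm f"
  unfolding l2norm_def by simp

lemma l2_cauchy_schwarz_prod: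
  assumes "f \<in> l2" "g \<in> l2"
  shows "(\<lambda>x. f x * g x) summable_on UNIV" "cmod (infsum (\<lambda>x. f x * g x) UNIV) \<le> l2norm f * l2norm g"
proof -
  have fin: "(\<Sum>x\<in>F. norm (f x * g x)) \<le> l2norm f * l2norm g" if "finite F" for F
  proof -
    have "(\<Sum>x\<in>F. norm (f x * g x)) = (\<Sum>x\<in>F. \<bar>cmod (f x)\<bar> * \<bar>cmod (g x)\<bar>)"
      by (simp add: norm_mult)
    also have "\<dots> \<le> L2_set (\<lambda>x. cmod (f x)) F * L2_set (\<lambda>x. cmod (g x)) F"
      by (rule L2_set_mult_ineq)
    also have "\<dots> \<le> l2norm f * l2norm g"
      using L2_set_le_l2norm[OF assms(1) that] L2_set_le_l2norm[OF assms(2) that]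
      by (intro mult_mono) (auto simp: l2norm_nonneg)
    finally show ?thesis .
  qed
  have abs: "(\<lambda>x. norm (f x * g x)) summable_on UNIV"
    unfolding abs_summable_iff_bdd_above using fin by (auto intro!: bdd_aboveI2)
  then show "(\<lambda>x. f x * g x) summable_on UNIV"
    using summable_on_iff_abs_summable_on_complex by blast
  have "cmod (infsum (\<lambda>x. f x * g x) UNIV) \<le> infsum (\<lambda>x. norm (f x * g x)) UNIV"
    by (rule norm_infsum_bound[OF abs])
  also have "\<dots> \<le> l2norm f * l2norm g"
    by (rule infsum_le_finite_sums[OF abs]) (use fin in auto)
  finally show "cmod (infsum (\<lambda>x. f x * g x) UNIV) \<le> l2norm f * l2norm g" .
qed

lemma l2_inner_summable: "f \<in> l2 \<Longrightarrow> g \<in> l2 \<Longrightarrow> (\<lambda>x. cnj (f x) * g x) summable_on UNIV"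
  using l2_cauchy_schwarz_prod(1)[OF l2_cnj] by blast

lemma l2_inner_cauchy_schwarz: "f \<in> l2 \<Longrightarrow> g \<in> l2 \<Longrightarrow> cmod (l2_inner f g) \<le> l2norm f * l2norm g"
  unfolding l2_inner_def using l2_cauchy_schwarz_prod(2)[OF l2_cnj, of f g] by (simp add: l2norm_cnj)

lemma l2_inner_self: assumes "f \<in> l2" shows "l2_inner f f = complex_of_real (l2_normsq f)"
proof -
  have "(\<lambda>x. cnj (f x) * f x) = (\<lambda>x. complex_of_real ((cmod (f x))^2))"
    by (rule ext, metis complex_norm_square mult.commute)
  then have "l2_inner f f = infsum (\<lambda>x. complex_of_real ((cmod (f x))^2)) UNIV" by (simp add: l2_inner_def)
  also have "\<dots> = complex_of_real (l2_normsq f)" unfolding l2_normsq_def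
    by (rule infsumI, rule has_sum_of_real, rule has_sum_infsum) (use assms in \<open>simp add: l2_def\<close>)
  finally show ?thesis .
qed

lemma infsum_finite_support:
  assumes "finite F" "\<And>x. x \<notin> F \<Longrightarrow> g x = 0"
  shows "infsum g UNIV = sum g F" "g summable_on UNIV"
proof -
  have "infsum g UNIV = infsum g F" by (rule infsum_cong_neutral) (use assms in auto)
  then show "infsum g UNIV = sum g F" using assms by simp
  have "g summable_on UNIV \<longleftrightarrow> g summable_on F" by (rule summable_on_cong_neutral) (use assms in auto)
  then show "g summable_on UNIV" using assms by simp
qed

lemma infsum_sum_finite:
  fixes f :: "'i \<Rightarrow> 'a \<Rightarrow> complex"
  assumes "finite I" "\<And>i. i \<in> I \<Longrightarrow> f i summable_on A"
  shows "infsum (\<lambda>x. \<Sum>i\<in>I. f i x) A = (\<Sum>i\<in>I. infsum (f i) A)"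
    "(\<lambda>x. \<Sum>i\<in>I. f i x) summable_on A"
  using assms
proof (induction I rule: finite_induct)
  case empty
  { case 1 show ?case by simp }
  { case 2 show ?case by simp }
next
  case (insert a I)
  { case 1
    have "infsum (\<lambda>x. \<Sum>i\<in>insert a I. f i x) A = infsum (\<lambda>x. f a x + (\<Sum>i\<in>I. f i x)) A"
      using insert by simp
    also have "\<dots> = infsum (f a) A + infsum (\<lambda>x. \<Sum>i\<in>I. f i x) A"
      by (rule infsum_add) (use insert 1 in auto)
    finally show ?case using insert 1 by simp }
  { case 2
    have "(\<lambda>x. f a x + (\<Sum>i\<in>I. f i x)) summable_on A"
      by (rule summable_on_add) (use insert 2 in auto)
    then show ?case using insert by simp }
qed

lemma infsum_diff_complex:
  fixes f g :: "'a \<Rightarrow> complex"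
  assumes "f summable_on A" "g summable_on A"
  shows "infsum (\<lambda>x. f x - g x) A = infsum f A - infsum g A"
proof -
  have "(\<lambda>x. - g x) summable_on A" using assms(2) by (simp add: summable_on_uminus)
  then have "infsum (\<lambda>x. f x + - g x) A = infsum f A + infsum (\<lambda>x. - g x) A"
    by (intro infsum_add assms(1))
  then show ?thesis by (simp add: infsum_uminus)
qed

lemma l2_inner_diff_right: "u \<in> l2 \<Longrightarrow> v \<in> l2 \<Longrightarrow> w \<in> l2 \<Longrightarrow> l2_inner u (v - w) = l2_inner u v - l2_inner u w"
  unfolding l2_inner_def by (simp add: right_diff_distrib infsum_diff_complex l2_inner_summable)

lemma l2_inner_diff_left: "u \<in> l2 \<Longrightarrow> v \<in> l2 \<Longrightarrow> w \<in> l2 \<Longrightarrow> l2_inner (u - v) w = l2_inner u w - l2_inner v w"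
  unfolding l2_inner_def by (simp add: left_diff_distrib infsum_diff_complex l2_inner_summable)

lemma sum_vec_apply: "(\<Sum>n\<in>I. (g n :: 'a \<Rightarrow> complex)) x = (\<Sum>n\<in>I. g n x)"
  by (induction I rule: infinite_finite_induct) auto

lemma l2_inner_sum_right:
  assumes "f \<in> l2" "\<And>n. n \<in> I \<Longrightarrow> g n \<in> l2" "finite I"
  shows "l2_inner f (\<Sum>n\<in>I. g n) = (\<Sum>n\<in>I. l2_inner f (g n))"
proof -
  have "l2_inner f (\<Sum>n\<in>I. g n) = infsum (\<lambda>x. \<Sum>n\<in>I. cnj (f x) * g n x) UNIV"
    unfolding l2_inner_def sum_vec_apply by (simp add: sum_distrib_left)
  also have "\<dots> = (\<Sum>n\<in>I. infsum (\<lambda>x. cnj (f x) * g n x) UNIV)"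
    by (rule infsum_sum_finite(1)[OF assms(3)]) (use l2_inner_summable assms in blast)
  finally show ?thesis by (simp add: l2_inner_def)
qed

lemma unit_vec_l2: "unit_vec a \<in> l2" "l2norm (unit_vec a) = 1"
proof -
  have "l2_normsq (unit_vec a) = 1" unfolding l2_normsq_def
    by (subst infsum_finite_support[of "{a}"]) (auto simp: unit_vec_def)
  then show "l2norm (unit_vec a) = 1" by (simp add: l2norm_eq_sqrt)
  show "unit_vec a \<in> l2" unfolding l2_def mem_Collect_eq
    by (rule infsum_finite_support(2)[of "{a}"]) (auto simp: unit_vec_def)
qed

lemma l2_inner_unit_vec: "l2_inner u (unit_vec j) = cnj (u j)"
  unfolding l2_inner_def by (subst infsum_finite_support[of "{j}"]) (auto simp: unit_vec_def)

lemma norm_entry_le_l2norm: "f \<in> l2 \<Longrightarrow> cmod (f a) \<le> l2norm f"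
proof -
  assume "f \<in> l2"
  then have "(\<Sum>x\<in>{a}. (cmod (f x))^2) \<le> l2_normsq f" by (rule sum_sq_le_l2_normsq) auto
  then have "sqrt ((cmod (f a))^2) \<le> sqrt (l2_normsq f)" by (intro real_sqrt_le_mono) simp
  then show ?thesis by (simp add: l2norm_eq_sqrt)
qed

lemma restr_finite_l2: "finite F \<Longrightarrow> restr F f \<in> l2"
  unfolding l2_def mem_Collect_eq by (rule infsum_finite_support(2)[of F]) (auto simp: restr_def)

lemma l2_normsq_restr_finite: "finite F \<Longrightarrow> l2_normsq (restr F f) = (\<Sum>x\<in>F. (cmod (f x))^2)"
  unfolding l2_normsq_def by (subst infsum_finite_support[of F]) (auto simp: restr_def)

lemma restr_l2: assumes "f \<in> l2" shows "restr F f \<in> l2" "l2norm (restr F f) \<le> l2norm f"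
proof -
  have "(\<Sum>x\<in>G. (cmod (restr F f x))^2) \<le> (l2norm f)^2" if "finite G" for G
  proof -
    have "(\<Sum>x\<in>G. (cmod (restr F f x))^2) \<le> (\<Sum>x\<in>G. (cmod (f x))^2)"
      by (rule sum_mono) (auto simp: restr_def)
    also have "\<dots> \<le> l2_normsq f" by (rule sum_sq_le_l2_normsq[OF assms that])
    finally show ?thesis by (simp add: l2norm_power2)
  qed
  then show "restr F f \<in> l2" "l2norm (restr F f) \<le> l2norm f"
    using l2norm_le_if_sum_sq_le[of "restr F f" "l2norm f"] by (auto simp: l2norm_nonneg)
qed

lemma restr_diff: "restr R (u - v) = restr R u - restr R v" unfolding restr_def by (rule ext) simp

lemma l2norm_tail_le: assumes "w \<in> l2" shows "w - restr R w \<in> l2" "l2norm (w - restr R w) \<le> l2norm w"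
proof -
  have "w - restr R w = restr (- R) w" by (rule ext) (simp add: restr_def)
  then show "w - restr R w \<in> l2" "l2norm (w - restr R w) \<le> l2norm w" using restr_l2[OF assms, of "- R"] by auto
qed

lemma l2_normsq_eq_0_imp: assumes "f \<in> l2" "l2_normsq f = 0" shows "f = 0"
proof (rule ext)
  fix x
  have "(\<lambda>x. (cmod (f x))^2) x = 0"
    by (rule nonneg_infsum_le_0D[of _ UNIV]) (use assms in \<open>auto simp: l2_normsq_def l2_def\<close>)
  then show "f x = 0 x" by simp
qed

lemma l2_normsq_tail_le:
  assumes "f \<in> l2" "finite F"
  shows "f - restr F f \<in> l2" "l2_normsq (f - restr F f) \<le> l2_normsq f - (\<Sum>x\<in>F. (cmod (f x))^2)"
proof -
  have fin: "(\<Sum>x\<in>G. (cmod ((f - restr F f) x))^2) \<le> l2_normsq f - (\<Sum>x\<in>F. (cmod (f x))^2)" if G: "finite G" for G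
  proof -
    have "(\<Sum>x\<in>G. (cmod ((f - restr F f) x))^2) = (\<Sum>x\<in>G - F. (cmod (f x))^2)"
    proof (rule sum.mono_neutral_cong_right)
      show "finite G" by (rule G)
      show "G - F \<subseteq> G" by blast
      show "\<forall>x\<in>G - (G - F). (cmod ((f - restr F f) x))^2 = 0" by (simp add: restr_def)
      show "\<And>x. x \<in> G - F \<Longrightarrow> (cmod ((f - restr F f) x))^2 = (cmod (f x))^2" by (simp add: restr_def)
    qed
    also have "\<dots> = (\<Sum>x\<in>G \<union> F. (cmod (f x))^2) - (\<Sum>x\<in>F. (cmod (f x))^2)"
    proof -
      have e: "G \<union> F = (G - F) \<union> F" by blast
      have "(\<Sum>x\<in>(G - F) \<union> F. (cmod (f x))^2) = (\<Sum>x\<in>G - F. (cmod (f x))^2) + (\<Sum>x\<in>F. (cmod (f x))^2)"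
        by (rule sum.union_disjoint) (use G assms(2) in blast)+
      then show ?thesis by (simp only: e)
    qed
    also have "\<dots> \<le> l2_normsq f - (\<Sum>x\<in>F. (cmod (f x))^2)"
      using sum_sq_le_l2_normsq[OF assms(1), of "G \<union> F"] G assms(2) by simp
    finally show ?thesis .
  qed
  show "f - restr F f \<in> l2" by (rule l2_if_sum_sq_bounded(1)[OF fin])
  show "l2_normsq (f - restr F f) \<le> l2_normsq f - (\<Sum>x\<in>F. (cmod (f x))^2)" by (rule l2_if_sum_sq_bounded(2)[OF fin])
qed

lemma eventually_tail_small:
  assumes "f \<in> l2" "e > 0"
  shows "eventually (\<lambda>F. finite F \<and> l2norm (f - restr F f) < e) (finite_subsets_at_top UNIV)"
proof -
  have "((\<lambda>F. \<Sum>x\<in>F. (cmod (f x))^2) \<longlongrightarrow> l2_normsq f) (finite_subsets_at_top UNIV)"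
    unfolding l2_normsq_def by (rule infsum_tendsto) (use assms in \<open>simp add: l2_def\<close>)
  then have ev: "eventually (\<lambda>F. dist (\<Sum>x\<in>F. (cmod (f x))^2) (l2_normsq f) < e^2) (finite_subsets_at_top UNIV)"
    using assms(2) by (intro tendstoD) auto
  have fin: "eventually (\<lambda>F. finite F) (finite_subsets_at_top UNIV)"
    by (auto simp: eventually_finite_subsets_at_top)
  show ?thesis
  proof (rule eventually_mono[OF eventually_conj[OF ev fin]])
    fix F assume F: "dist (\<Sum>x\<in>F. (cmod (f x))^2) (l2_normsq f) < e^2 \<and> finite F"
    then have "l2_normsq (f - restr F f) \<le> l2_normsq f - (\<Sum>x\<in>F. (cmod (f x))^2)" using l2_normsq_tail_le(2)[OF assms(1)] by blast
    then have "l2_normsq (f - restr F f) < e^2" using F by (auto simp: dist_real_def)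
    then have "sqrt (l2_normsq (f - restr F f)) < sqrt (e^2)" by (rule real_sqrt_less_mono)
    then show "finite F \<and> l2norm (f - restr F f) < e" using F assms(2) by (simp add: l2norm_eq_sqrt)
  qed
qed

lemma finite_set_tails_small:
  fixes F :: "('a \<Rightarrow> complex) set"
  assumes "finite F" "F \<subseteq> l2" "d > 0"
  obtains R where "finite R" "\<And>g. g \<in> F \<Longrightarrow> l2norm (g - restr R g) < d"
proof -
  have "eventually (\<lambda>R. \<forall>g\<in>F. finite R \<and> l2norm (g - restr R g) < d) (finite_subsets_at_top UNIV)"
    using assms by (intro eventually_ball_finite ballI eventually_tail_small) auto
  moreover have "eventually (\<lambda>R. finite R) (finite_subsets_at_top UNIV)"
    by (auto simp: eventually_finite_subsets_at_top)
  ultimately have "eventually (\<lambda>R. finite R \<and> (\<forall>g\<in>F. l2norm (g - restr R g) < d))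
      (finite_subsets_at_top UNIV)"
    by eventually_elim auto
  then obtain R where "finite R \<and> (\<forall>g\<in>F. l2norm (g - restr R g) < d)"
    using eventually_happens'[OF finite_subsets_at_top_neq_bot] by blast
  then show ?thesis using that by blast
qed

lemma complex_eq_if_norm_diff_le: assumes "\<And>e. e > 0 \<Longrightarrow> cmod (a - b) \<le> e" shows "a = (b::complex)"
proof (rule ccontr)
  assume "a \<noteq> b"
  then have p: "cmod (a - b) > 0" by simp
  have "cmod (a - b) \<le> cmod (a - b) / 2" by (rule assms) (use p in simp)
  then show False using p by simp
qed

lemma l2_reindex:
  assumes "inj \<phi>" "g \<in> l2"
  shows "(\<lambda>l. g (\<phi> l)) \<in> l2" "l2norm (\<lambda>l. g (\<phi> l)) \<le> l2norm g"
proof -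
  have "(\<Sum>l\<in>G. (cmod (g (\<phi> l)))^2) \<le> (l2norm g)^2" if G: "finite G" for G
  proof -
    have "(\<Sum>y\<in>\<phi> ` G. (cmod (g y))^2) = (\<Sum>l\<in>G. (cmod (g (\<phi> l)))^2)"
      using sum.reindex[OF inj_on_subset[OF assms(1) subset_UNIV], of "\<lambda>y. (cmod (g y))^2" G]
      by (simp add: comp_def)
    moreover have "(\<Sum>y\<in>\<phi> ` G. (cmod (g y))^2) \<le> l2_normsq g" by (rule sum_sq_le_l2_normsq[OF assms(2)]) (use G in auto)
    ultimately show ?thesis by (simp add: l2norm_power2)
  qed
  then show "(\<lambda>l. g (\<phi> l)) \<in> l2" "l2norm (\<lambda>l. g (\<phi> l)) \<le> l2norm g"
    using l2norm_le_if_sum_sq_le[of "\<lambda>l. g (\<phi> l)" "l2norm g"] l2norm_nonneg[of g] by auto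
qed

section \<open>Bounded matrices and the operator norm\<close>

lemma mat_apply_add:
  assumes "\<And>y. (\<lambda>x. m y x * f x) summable_on UNIV" "\<And>y. (\<lambda>x. m y x * g x) summable_on UNIV"
  shows "mat_apply m (f + g) = mat_apply m f + mat_apply m g"
  unfolding mat_apply_def
  by (rule ext) (simp add: distrib_left infsum_add assms)

lemma mat_apply_scale: "mat_apply m (\<lambda>x. c * f x) = (\<lambda>y. c * mat_apply m f y)"
  unfolding mat_apply_def by (rule ext) (simp add: infsum_cmult_right' mult.left_commute)

lemma mat_apply_uminus: "mat_apply m (- f) = - mat_apply m f"
  unfolding mat_apply_def by (rule ext) (simp add: infsum_uminus)

lemma mat_apply_zero[simp]: "mat_apply m 0 = 0"
  unfolding mat_apply_def by (rule ext) simp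

lemma bounded_mat_row_summable: "bounded_mat m \<Longrightarrow> f \<in> l2 \<Longrightarrow> (\<lambda>x. m y x * f x) summable_on UNIV"
  unfolding bounded_mat_def by blast

lemma mat_apply_diff:
  assumes "bounded_mat m" "f \<in> l2" "g \<in> l2"
  shows "mat_apply m (f - g) = mat_apply m f - mat_apply m g"
proof -
  have "mat_apply m (f + (- g)) = mat_apply m f + mat_apply m (- g)"
    by (rule mat_apply_add) (use bounded_mat_row_summable[OF assms(1)] assms l2_uminus in blast)+
  then show ?thesis by (simp add: mat_apply_uminus)
qed

lemma bounded_matE:
  assumes "bounded_mat m"
  obtains C where "0 \<le> C" "\<And>f. f \<in> l2 \<Longrightarrow> mat_apply m f \<in> l2 \<and> l2norm (mat_apply m f) \<le> C * l2norm f"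
proof -
  from assms obtain C where C: "\<And>f. f \<in> l2 \<Longrightarrow> mat_apply m f \<in> l2 \<and> l2norm (mat_apply m f) \<le> C * l2norm f"
    unfolding bounded_mat_def by blast
  have "C * l2norm f \<le> max C 0 * l2norm f" for f
    by (intro mult_right_mono) (auto simp: l2norm_nonneg)
  moreover have "0 \<le> max C 0" by simp
  ultimately show ?thesis using C that[of "max C 0"] by (meson order_trans)
qed

lemma opnorm_bdd_above:
  assumes "bounded_mat m"
  shows "bdd_above {l2norm (mat_apply m f) | f. f \<in> l2 \<and> l2norm f \<le> 1}"
proof -
  obtain C where C: "0 \<le> C" "\<And>f. f \<in> l2 \<Longrightarrow> mat_apply m f \<in> l2 \<and> l2norm (mat_apply m f) \<le> C * l2norm f"
    using bounded_matE[OF assms] by blast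
  have "l2norm (mat_apply m f) \<le> C" if "f \<in> l2" "l2norm f \<le> 1" for f
  proof -
    have "l2norm (mat_apply m f) \<le> C * l2norm f" using C that by blast
    also have "\<dots> \<le> C * 1" using that C by (intro mult_left_mono) auto
    finally show ?thesis by simp
  qed
  then show ?thesis by (auto intro!: bdd_aboveI[of _ C])
qed

lemma opnorm_nonneg: assumes "bounded_mat m" shows "0 \<le> opnorm m"
proof -
  have "0 \<in> {l2norm (mat_apply m f) | f. f \<in> l2 \<and> l2norm f \<le> 1}"
    by (auto intro!: exI[of _ 0])
  then show ?thesis unfolding opnorm_def
    by (rule cSup_upper2) (auto intro: opnorm_bdd_above[OF assms])
qed

lemma bounded_mat_apply:
  assumes "bounded_mat m" "f \<in> l2"
  shows "mat_apply m f \<in> l2" "l2norm (mat_apply m f) \<le> opnorm m * l2norm f"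
proof -
  show mf: "mat_apply m f \<in> l2" using assms unfolding bounded_mat_def by blast
  show "l2norm (mat_apply m f) \<le> opnorm m * l2norm f"
  proof (cases "l2norm f = 0")
    case True
    then have "l2_normsq f = 0" by (simp add: l2norm_eq_sqrt l2_normsq_nonneg)
    then have "f = 0" using l2_normsq_eq_0_imp assms by blast
    then show ?thesis by simp
  next
    case False
    then have pos: "l2norm f > 0" using l2norm_nonneg[of f] by linarith
    define c where "c = complex_of_real (1 / l2norm f)"
    define g where "g = (\<lambda>x. c * f x)"
    have g1: "g \<in> l2" unfolding g_def by (rule l2_scale[OF assms(2)])
    have "l2norm g = cmod c * l2norm f" unfolding g_def by (rule l2norm_scale)
    also have "\<dots> = 1" using pos unfolding c_def by (simp add: norm_divide)
    finally have g: "g \<in> l2" "l2norm g \<le> 1" using g1 by auto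
    have "l2norm (mat_apply m g) \<le> opnorm m" unfolding opnorm_def
      by (rule cSup_upper[OF _ opnorm_bdd_above[OF assms(1)]]) (use g in blast)
    moreover have "l2norm (mat_apply m g) = l2norm (mat_apply m f) / l2norm f"
      unfolding g_def mat_apply_scale l2norm_scale[of c "mat_apply m f"] using pos
      by (simp add: c_def norm_divide)
    ultimately show ?thesis using pos by (simp add: divide_le_eq mult.commute)
  qed
qed

lemma opnorm_le_if_bounded_by:
  assumes "0 \<le> C" "\<And>f. f \<in> l2 \<Longrightarrow> l2norm (mat_apply m f) \<le> C * l2norm f"
  shows "opnorm m \<le> C"
  unfolding opnorm_def
proof (rule cSup_least)
  show "{l2norm (mat_apply m f) | f. f \<in> l2 \<and> l2norm f \<le> 1} \<noteq> {}"
    by (auto intro!: exI[of _ 0])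
  fix x assume "x \<in> {l2norm (mat_apply m f) | f. f \<in> l2 \<and> l2norm f \<le> 1}"
  then obtain f where f: "f \<in> l2" "l2norm f \<le> 1" "x = l2norm (mat_apply m f)" by blast
  have "x \<le> C * l2norm f" using assms(2) f by simp
  also have "\<dots> \<le> C * 1" using f assms(1) by (intro mult_left_mono) auto
  finally show "x \<le> C" by simp
qed

lemma opnorm_le_if_unit_ball_bounded:
  assumes "0 \<le> C" "\<And>f. f \<in> l2 \<Longrightarrow> l2norm f \<le> 1 \<Longrightarrow> l2norm (mat_apply m f) \<le> C"
  shows "opnorm m \<le> C"
  unfolding opnorm_def
  by (rule cSup_least) (use assms in \<open>auto intro!: exI[of _ 0]\<close>)

lemma bounded_matI:
  assumes "\<And>f y. f \<in> l2 \<Longrightarrow> (\<lambda>x. m y x * f x) summable_on UNIV"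
    "\<And>f. f \<in> l2 \<Longrightarrow> mat_apply m f \<in> l2" "\<And>f. f \<in> l2 \<Longrightarrow> l2norm (mat_apply m f) \<le> C * l2norm f"
    "0 \<le> C"
  shows "bounded_mat m" "opnorm m \<le> C"
proof -
  show "bounded_mat m" unfolding bounded_mat_def using assms by blast
  show "opnorm m \<le> C" using assms by (intro opnorm_le_if_bounded_by) auto
qed

lemma bounded_mat_add:
  assumes "bounded_mat a" "bounded_mat b"
  shows "bounded_mat (a + b)" "opnorm (a + b) \<le> opnorm a + opnorm b"
    "\<And>f. f \<in> l2 \<Longrightarrow> mat_apply (a + b) f = mat_apply a f + mat_apply b f"
proof -
  have app: "mat_apply (a + b) f = mat_apply a f + mat_apply b f" if "f \<in> l2" for f
    unfolding mat_apply_def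
    by (rule ext) (simp add: distrib_right infsum_add bounded_mat_row_summable[OF assms(1) that] bounded_mat_row_summable[OF assms(2) that])
  show "\<And>f. f \<in> l2 \<Longrightarrow> mat_apply (a + b) f = mat_apply a f + mat_apply b f" by (rule app)
  have *: "mat_apply (a + b) f \<in> l2 \<and> l2norm (mat_apply (a + b) f) \<le> (opnorm a + opnorm b) * l2norm f"
    if "f \<in> l2" for f
  proof -
    have "l2norm (mat_apply a f + mat_apply b f) \<le> l2norm (mat_apply a f) + l2norm (mat_apply b f)"
      using l2_add bounded_mat_apply assms that by blast
    also have "\<dots> \<le> opnorm a * l2norm f + opnorm b * l2norm f"
      using bounded_mat_apply assms that by (meson add_mono)
    moreover have "mat_apply a f + mat_apply b f \<in> l2"
      by (rule l2_add(1)[OF bounded_mat_apply(1)[OF assms(1) that] bounded_mat_apply(1)[OF assms(2) that]])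
    ultimately show ?thesis using app[OF that] by (simp add: distrib_right)
  qed
  have sm: "(\<lambda>x. (a + b) y x * f x) summable_on UNIV" if "f \<in> l2" for f y
    by (simp add: distrib_right summable_on_add bounded_mat_row_summable[OF assms(1) that] bounded_mat_row_summable[OF assms(2) that])
  have A: "\<And>f. f\<in>l2 \<Longrightarrow> mat_apply (a+b) f \<in> l2" using * by blast
  have B: "\<And>f. f\<in>l2 \<Longrightarrow> l2norm (mat_apply (a + b) f) \<le> (opnorm a + opnorm b) * l2norm f" using * by blast
  have nn: "0 \<le> opnorm a + opnorm b" using opnorm_nonneg[OF assms(1)] opnorm_nonneg[OF assms(2)] by linarith
  show "bounded_mat (a + b)" "opnorm (a + b) \<le> opnorm a + opnorm b"
    using bounded_matI[OF sm A B nn] by auto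
qed

lemma bounded_mat_uminus:
  assumes "bounded_mat a"
  shows "bounded_mat (- a)" "opnorm (- a) = opnorm a"
proof -
  have app: "mat_apply (- a) f = - mat_apply a f" for f
    unfolding mat_apply_def by (rule ext) (simp add: infsum_uminus)
  have sm: "(\<lambda>x. (- a) y x * f x) summable_on UNIV" if "f \<in> l2" for f y
  proof -
    have "(\<lambda>x. - (a y x * f x)) summable_on UNIV" using bounded_mat_row_summable[OF assms that]
      by (simp add: summable_on_uminus)
    then show ?thesis by simp
  qed
  show b: "bounded_mat (- a)"
    using bounded_matI[of "-a" "opnorm a"] sm bounded_mat_apply[OF assms] opnorm_nonneg[OF assms]
    by (auto simp: app l2_uminus l2norm_uminus)
  have "opnorm (- a) \<le> opnorm a"
    using bounded_matI[of "-a" "opnorm a"] sm bounded_mat_apply[OF assms] opnorm_nonneg[OF assms]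
    by (auto simp: app l2_uminus l2norm_uminus)
  moreover have "opnorm a \<le> opnorm (- a)"
    using opnorm_le_if_bounded_by[of "opnorm (-a)" a] bounded_mat_apply[OF b] opnorm_nonneg[OF b]
    by (auto simp: app l2norm_uminus)
  ultimately show "opnorm (- a) = opnorm a" by simp
qed

lemma bounded_mat_diff:
  assumes "bounded_mat a" "bounded_mat b"
  shows "bounded_mat (a - b)" "opnorm (a - b) \<le> opnorm a + opnorm b"
proof -
  have "a - b = a + (- b)" by simp
  then show "bounded_mat (a - b)" "opnorm (a - b) \<le> opnorm a + opnorm b"
    using bounded_mat_add[OF assms(1) bounded_mat_uminus(1)[OF assms(2)]] bounded_mat_uminus[OF assms(2)] by auto
qed

lemma mat_apply_uminus_mat: "mat_apply (- a) f = - mat_apply a f"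
  unfolding mat_apply_def by (rule ext) (simp add: infsum_uminus)

lemma mat_apply_diff_mat:
  assumes "bounded_mat a" "bounded_mat b" "f \<in> l2"
  shows "mat_apply (a - b) f = mat_apply a f - mat_apply b f"
proof -
  have "a - b = a + (- b)" by simp
  then show ?thesis using bounded_mat_add(3)[OF assms(1) bounded_mat_uminus(1)[OF assms(2)] assms(3)]
    by (simp add: mat_apply_uminus_mat)
qed

lemma opnorm_diff_commute: "bounded_mat a \<Longrightarrow> bounded_mat b \<Longrightarrow> opnorm (a - b) = opnorm (b - a)"
  using bounded_mat_uminus(2)[OF bounded_mat_diff(1)[of a b]] by (metis minus_diff_eq)

lemma opnorm_triangle:
  assumes "bounded_mat a" "bounded_mat b" "bounded_mat c"
  shows "opnorm (a - c) \<le> opnorm (a - b) + opnorm (b - c)"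
proof -
  have "a - c = (a - b) + (b - c)" by simp
  then show ?thesis using bounded_mat_add(2)[OF bounded_mat_diff(1)[OF assms(1,2)] bounded_mat_diff(1)[OF assms(2,3)]] by simp
qed

lemma sum_mat_entry: "(\<Sum>n\<in>I. (M n :: 'b \<Rightarrow> 'a \<Rightarrow> complex)) y x = (\<Sum>n\<in>I. M n y x)"
  by (induction I rule: infinite_finite_induct) auto

lemma bounded_mat_zero_lambda: "bounded_mat (\<lambda>(y::'b) (x::'a). 0::complex)" "opnorm (\<lambda>(y::'b) (x::'a). 0::complex) = 0"
  "mat_apply (\<lambda>(y::'b) (x::'a). 0::complex) f = (\<lambda>y. 0)"
proof -
  show app: "mat_apply (\<lambda>(y::'b) (x::'a). 0::complex) f = (\<lambda>y. 0)" for f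
    unfolding mat_apply_def by simp
  have sm: "(\<lambda>x. (\<lambda>(y::'b) (x::'a). 0::complex) y x * f x) summable_on UNIV" for f y by simp
  have a1: "mat_apply (\<lambda>(y::'b) (x::'a). 0::complex) f \<in> l2" for f
    unfolding app using l2_zero by (simp add: zero_fun_def)
  have a2: "l2norm (mat_apply (\<lambda>(y::'b) (x::'a). 0::complex) f) \<le> 0 * l2norm f" for f
    unfolding app l2norm_def by simp
  show b: "bounded_mat (\<lambda>(y::'b) (x::'a). 0::complex)"
    using bounded_matI(1)[OF sm a1 a2] by simp
  have "opnorm (\<lambda>(y::'b) (x::'a). 0::complex) \<le> 0"
    using bounded_matI(2)[OF sm a1 a2] by simp
  then show "opnorm (\<lambda>(y::'b) (x::'a). 0::complex) = 0" using opnorm_nonneg[OF b] by simp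
qed

lemma bounded_mat_sum:
  fixes M :: "'i \<Rightarrow> 'b \<Rightarrow> 'a \<Rightarrow> complex"
  assumes "\<And>n. n \<in> I \<Longrightarrow> bounded_mat (M n)"
  shows "bounded_mat (\<Sum>n\<in>I. M n) \<and> opnorm (\<Sum>n\<in>I. M n) \<le> (\<Sum>n\<in>I. opnorm (M n)) \<and>
    (\<forall>f\<in>l2. mat_apply (\<Sum>n\<in>I. M n) f = (\<Sum>n\<in>I. mat_apply (M n) f))"
  using assms
proof (induction I rule: infinite_finite_induct)
  case (infinite I)
  then show ?case by (simp add: bounded_mat_zero_lambda[where 'a='a and 'b='b])
next
  case empty
  then show ?case by (simp add: bounded_mat_zero_lambda[where 'a='a and 'b='b])
next
  case (insert a I)
  then have IH: "bounded_mat (\<Sum>n\<in>I. M n)" "opnorm (\<Sum>n\<in>I. M n) \<le> (\<Sum>n\<in>I. opnorm (M n))"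
    "\<forall>f\<in>l2. mat_apply (\<Sum>n\<in>I. M n) f = (\<Sum>n\<in>I. mat_apply (M n) f)" by auto
  have Ma: "bounded_mat (M a)" using insert by auto
  have e: "(\<Sum>n\<in>insert a I. M n) = M a + (\<Sum>n\<in>I. M n)" using insert by simp
  show ?case unfolding e sum.insert[OF insert(1,2)]
  proof (intro conjI ballI)
    show "bounded_mat (M a + (\<Sum>n\<in>I. M n))" by (rule bounded_mat_add(1)[OF Ma IH(1)])
    show "opnorm (M a + (\<Sum>n\<in>I. M n)) \<le> opnorm (M a) + (\<Sum>n\<in>I. opnorm (M n))"
      using bounded_mat_add(2)[OF Ma IH(1)] IH(2) by linarith
    fix f :: "'a \<Rightarrow> complex" assume f: "f \<in> l2"
    show "mat_apply (M a + (\<Sum>n\<in>I. M n)) f = mat_apply (M a) f + (\<Sum>n\<in>I. mat_apply (M n) f)"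
      using bounded_mat_add(3)[OF Ma IH(1) f] IH(3) f by simp
  qed
qed

lemma mat_apply_restr_finite:
  assumes "finite F"
  shows "mat_apply m (restr F u) = (\<lambda>y. \<Sum>x\<in>F. m y x * u x)"
  unfolding mat_apply_def by (rule ext, subst infsum_finite_support[OF assms]) (auto simp: restr_def intro!: sum.cong)

lemma mat_apply_unit_vec: "mat_apply m (unit_vec a) = (\<lambda>y. m y a)"
  unfolding mat_apply_def by (rule ext, subst infsum_finite_support[of "{a}"]) (auto simp: unit_vec_def)

lemma column_l2:
  assumes "bounded_mat m"
  shows "(\<lambda>y. m y a) \<in> l2" "l2norm (\<lambda>y. m y a) \<le> opnorm m"
  using bounded_mat_apply[OF assms unit_vec_l2(1)[of a]] by (auto simp: mat_apply_unit_vec unit_vec_l2)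

lemma bounded_mat_sparse:
  fixes \<sigma> :: "'b \<Rightarrow> 'a" and c :: "'b \<Rightarrow> complex"
  assumes bnd: "\<And>x G. finite G \<Longrightarrow> G \<subseteq> {y. \<sigma> y = x} \<Longrightarrow> (\<Sum>y\<in>G. (cmod (c y))^2) \<le> B^2" and B: "0 \<le> B"
  shows "bounded_mat (\<lambda>y x. if x = \<sigma> y then c y else 0)" "opnorm (\<lambda>y x. if x = \<sigma> y then c y else 0) \<le> B"
proof -
  define M where "M = (\<lambda>(y::'b) (x::'a). if x = \<sigma> y then c y else 0)"
  have app: "mat_apply M f = (\<lambda>y. c y * f (\<sigma> y))" for f
    unfolding mat_apply_def M_def by (rule ext, subst infsum_finite_support[of "{\<sigma> _}"]) auto
  have sm: "(\<lambda>x. M y x * f x) summable_on UNIV" for f y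
    by (rule infsum_finite_support(2)[of "{\<sigma> y}"]) (auto simp: M_def)
  have fin: "(\<Sum>y\<in>G. (cmod (mat_apply M f y))^2) \<le> (B * l2norm f)^2" if f: "f \<in> l2" and G: "finite G" for f G
  proof -
    have "(\<Sum>y\<in>G. (cmod (mat_apply M f y))^2) = (\<Sum>y\<in>G. (cmod (c y))^2 * (cmod (f (\<sigma> y)))^2)"
      by (simp add: app norm_mult power_mult_distrib)
    also have "\<dots> = (\<Sum>x\<in>\<sigma> ` G. \<Sum>y\<in>{y\<in>G. \<sigma> y = x}. (cmod (c y))^2 * (cmod (f (\<sigma> y)))^2)"
      by (rule sum.image_gen[OF G])
    also have "\<dots> = (\<Sum>x\<in>\<sigma> ` G. (\<Sum>y\<in>{y\<in>G. \<sigma> y = x}. (cmod (c y))^2) * (cmod (f x))^2)"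
      by (rule sum.cong) (auto simp: sum_distrib_right)
    also have "\<dots> \<le> (\<Sum>x\<in>\<sigma> ` G. B^2 * (cmod (f x))^2)"
      by (rule sum_mono, rule mult_right_mono) (use G in \<open>auto intro!: bnd\<close>)
    also have "\<dots> = B^2 * (\<Sum>x\<in>\<sigma> ` G. (cmod (f x))^2)" by (simp add: sum_distrib_left)
    also have "\<dots> \<le> B^2 * l2_normsq f" by (intro mult_left_mono sum_sq_le_l2_normsq[OF f]) (use G in auto)
    also have "\<dots> = (B * l2norm f)^2" by (simp add: power_mult_distrib l2norm_power2)
    finally show ?thesis .
  qed
  have a: "mat_apply M f \<in> l2" "l2norm (mat_apply M f) \<le> B * l2norm f" if "f \<in> l2" for f
    using l2norm_le_if_sum_sq_le[of "mat_apply M f" "B * l2norm f"] fin[OF that] B l2norm_nonneg[of f] by auto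
  show "bounded_mat (\<lambda>y x. if x = \<sigma> y then c y else 0)" "opnorm (\<lambda>y x. if x = \<sigma> y then c y else 0) \<le> B"
    using bounded_matI[of M B, OF sm a(1) a(2) B] unfolding M_def by auto
qed

definition rowcut :: "'b set \<Rightarrow> ('b \<Rightarrow> 'a \<Rightarrow> complex) \<Rightarrow> ('b \<Rightarrow> 'a \<Rightarrow> complex)" where
  "rowcut R A = (\<lambda>y x. if y \<in> R then A y x else 0)"

definition colcut :: "'a set \<Rightarrow> ('b \<Rightarrow> 'a \<Rightarrow> complex) \<Rightarrow> ('b \<Rightarrow> 'a \<Rightarrow> complex)" where
  "colcut C A = (\<lambda>y x. if x \<in> C then A y x else 0)"

lemma rowcut_apply: "mat_apply (rowcut R A) f = restr R (mat_apply A f)"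
  unfolding mat_apply_def rowcut_def restr_def by (rule ext) auto

lemma colcut_apply: "mat_apply (colcut C A) f = mat_apply A (restr C f)"
  unfolding mat_apply_def colcut_def restr_def by (rule ext, rule infsum_cong) auto

lemma bounded_mat_rowcut:
  assumes "bounded_mat A"
  shows "bounded_mat (rowcut R A)" "opnorm (rowcut R A) \<le> opnorm A"
proof -
  have sm: "(\<lambda>x. rowcut R A y x * f x) summable_on UNIV" if "f \<in> l2" for f y
    using bounded_mat_row_summable[OF assms that, of y] by (cases "y \<in> R") (auto simp: rowcut_def)
  have a: "mat_apply (rowcut R A) f \<in> l2" "l2norm (mat_apply (rowcut R A) f) \<le> opnorm A * l2norm f" if "f \<in> l2" for f
    unfolding rowcut_apply using restr_l2[OF bounded_mat_apply(1)[OF assms that]] bounded_mat_apply(2)[OF assms that]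
    by (meson order_trans)+
  show "bounded_mat (rowcut R A)" "opnorm (rowcut R A) \<le> opnorm A"
    using bounded_matI[OF sm a(1) a(2) opnorm_nonneg[OF assms]] by auto
qed

lemma bounded_mat_colcut:
  assumes "bounded_mat A"
  shows "bounded_mat (colcut C A)" "opnorm (colcut C A) \<le> opnorm A"
proof -
  have sm: "(\<lambda>x. colcut C A y x * f x) summable_on UNIV" if "f \<in> l2" for f y
  proof -
    have "(\<lambda>x. A y x * restr C f x) summable_on UNIV" by (rule bounded_mat_row_summable[OF assms restr_l2(1)[OF that]])
    then show ?thesis by (rule summable_on_cong[THEN iffD1, rotated]) (auto simp: colcut_def restr_def)
  qed
  have a: "mat_apply (colcut C A) f \<in> l2" "l2norm (mat_apply (colcut C A) f) \<le> opnorm A * l2norm f" if "f \<in> l2" for f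
  proof -
    show "mat_apply (colcut C A) f \<in> l2" unfolding colcut_apply by (rule bounded_mat_apply(1)[OF assms restr_l2(1)[OF that]])
    have "l2norm (mat_apply A (restr C f)) \<le> opnorm A * l2norm (restr C f)"
      by (rule bounded_mat_apply(2)[OF assms restr_l2(1)[OF that]])
    also have "\<dots> \<le> opnorm A * l2norm f" by (intro mult_left_mono restr_l2(2)[OF that] opnorm_nonneg[OF assms])
    finally show "l2norm (mat_apply (colcut C A) f) \<le> opnorm A * l2norm f" unfolding colcut_apply .
  qed
  show "bounded_mat (colcut C A)" "opnorm (colcut C A) \<le> opnorm A"
    using bounded_matI[OF sm a(1) a(2) opnorm_nonneg[OF assms]] by auto
qed

section \<open>Adjoints and Gram matrices\<close>

lemma l2_inner_mat_apply_restr: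
  assumes "bounded_mat m" "h \<in> l2" "finite F"
  shows "l2_inner h (mat_apply m (restr F u)) = (\<Sum>x\<in>F. u x * cnj (mat_apply (mat_adj m) h x))"
proof -
  have sx: "(\<lambda>y. cnj (h y) * (m y x * u x)) summable_on UNIV" for x
  proof -
    have "(\<lambda>y. cnj (h y) * m y x) summable_on UNIV"
      by (rule l2_cauchy_schwarz_prod(1)[OF l2_cnj[OF assms(2)] column_l2(1)[OF assms(1)]])
    then have "(\<lambda>y. (cnj (h y) * m y x) * u x) summable_on UNIV" by (rule summable_on_cmult_left)
    then show ?thesis by (simp add: mult.assoc)
  qed
  have "l2_inner h (mat_apply m (restr F u)) = infsum (\<lambda>y. \<Sum>x\<in>F. cnj (h y) * (m y x * u x)) UNIV"
    unfolding l2_inner_def mat_apply_restr_finite[OF assms(3)] by (simp add: sum_distrib_left)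
  also have "\<dots> = (\<Sum>x\<in>F. infsum (\<lambda>y. cnj (h y) * (m y x * u x)) UNIV)"
    by (rule infsum_sum_finite(1)) (use assms sx in auto)
  also have "\<dots> = (\<Sum>x\<in>F. u x * cnj (mat_apply (mat_adj m) h x))"
  proof (rule sum.cong)
    fix x
    have "cnj (mat_apply (mat_adj m) h x) = infsum (\<lambda>y. m y x * cnj (h y)) UNIV"
      unfolding mat_apply_def mat_adj_def by (simp flip: infsum_cnj)
    moreover have "infsum (\<lambda>y. cnj (h y) * (m y x * u x)) UNIV = infsum (\<lambda>y. (m y x * cnj (h y)) * u x) UNIV"
      by (rule infsum_cong) (simp add: ac_simps)
    moreover have "infsum (\<lambda>y. (m y x * cnj (h y)) * u x) UNIV = infsum (\<lambda>y. m y x * cnj (h y)) UNIV * u x"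
      by (rule infsum_cmult_left')
    ultimately show "infsum (\<lambda>y. cnj (h y) * (m y x * u x)) UNIV = u x * cnj (mat_apply (mat_adj m) h x)"
      by (simp only: mult.commute)
  qed simp
  finally show ?thesis .
qed

lemma adjoint_apply_l2:
  assumes "bounded_mat m" "h \<in> l2"
  shows "mat_apply (mat_adj m) h \<in> l2" "l2norm (mat_apply (mat_adj m) h) \<le> opnorm m * l2norm h"
proof -
  define v where "v = mat_apply (mat_adj m) h"
  define K where "K = opnorm m * l2norm h"
  have K0: "0 \<le> K" unfolding K_def using opnorm_nonneg[OF assms(1)] l2norm_nonneg[of h] by simp
  have "(\<Sum>x\<in>F. (cmod (v x))^2) \<le> K^2" if F: "finite F" for F
  proof -
    define s where "s = (\<Sum>x\<in>F. (cmod (v x))^2)"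
    have s0: "0 \<le> s" unfolding s_def by (simp add: sum_nonneg)
    have "complex_of_real s = (\<Sum>x\<in>F. v x * cnj (v x))"
      by (simp only: s_def of_real_sum complex_norm_square)
    also have "\<dots> = l2_inner h (mat_apply m (restr F v))"
      unfolding v_def by (rule l2_inner_mat_apply_restr[OF assms F, symmetric])
    finally have eq: "complex_of_real s = l2_inner h (mat_apply m (restr F v))" .
    have rl2: "restr F v \<in> l2" by (rule restr_finite_l2[OF F])
    have nr: "l2norm (restr F v) = sqrt s" unfolding s_def l2norm_eq_sqrt l2_normsq_restr_finite[OF F] ..
    have "s = cmod (complex_of_real s)" using s0 by simp
    also have "\<dots> \<le> l2norm h * l2norm (mat_apply m (restr F v))"
      unfolding eq by (rule l2_inner_cauchy_schwarz[OF assms(2) bounded_mat_apply(1)[OF assms(1) rl2]])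
    also have "\<dots> \<le> l2norm h * (opnorm m * l2norm (restr F v))"
      by (intro mult_left_mono bounded_mat_apply(2)[OF assms(1) rl2] l2norm_nonneg)
    also have "\<dots> = K * sqrt s" unfolding nr K_def by simp
    finally have le: "s \<le> K * sqrt s" .
    show ?thesis
    proof (cases "s = 0")
      case True then show ?thesis unfolding s_def by simp
    next
      case False
      then have "sqrt s > 0" using s0 by simp
      moreover have "sqrt s * sqrt s \<le> K * sqrt s" using le s0 by (metis abs_of_nonneg real_sqrt_mult_self)
      ultimately have "sqrt s \<le> K" by (meson mult_right_le_imp_le)
      then have "(sqrt s)^2 \<le> K^2" by (intro power_mono) (auto simp: s0)
      then show ?thesis using s0 unfolding s_def by simp
    qed
  qed
  then show "v \<in> l2" "l2norm v \<le> K" using l2norm_le_if_sum_sq_le[of v K] K0 by auto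
qed

lemma bounded_mat_adj:
  assumes "bounded_mat m"
  shows "bounded_mat (mat_adj m)" "opnorm (mat_adj m) \<le> opnorm m"
proof -
  have sm: "(\<lambda>x. mat_adj m y x * f x) summable_on UNIV" if "f \<in> l2" for f y
    unfolding mat_adj_def by (rule l2_cauchy_schwarz_prod(1)[OF l2_cnj[OF column_l2(1)[OF assms]] that])
  show "bounded_mat (mat_adj m)" "opnorm (mat_adj m) \<le> opnorm m"
    using bounded_matI[OF sm adjoint_apply_l2(1)[OF assms] adjoint_apply_l2(2)[OF assms] opnorm_nonneg[OF assms]] by auto
qed

lemma l2_inner_adjoint:
  assumes "bounded_mat m" "f \<in> l2" "h \<in> l2"
  shows "l2_inner h (mat_apply m f) = l2_inner (mat_apply (mat_adj m) h) f"
proof (rule complex_eq_if_norm_diff_le)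
  fix e :: real assume e: "e > 0"
  define v where "v = mat_apply (mat_adj m) h"
  have v: "v \<in> l2" unfolding v_def by (rule adjoint_apply_l2(1)[OF assms(1,3)])
  define K where "K = l2norm h * opnorm m"
  have K0: "0 \<le> K" unfolding K_def using opnorm_nonneg[OF assms(1)] l2norm_nonneg[of h] by simp
  define d where "d = e / (2 * (K + 1))"
  have d: "d > 0" "K * d \<le> e / 2" using e K0 by (auto simp: d_def field_simps)
  have ev1: "eventually (\<lambda>F. dist (\<Sum>x\<in>F. cnj (v x) * f x) (l2_inner v f) < e/2) (finite_subsets_at_top UNIV)"
    unfolding l2_inner_def by (rule tendstoD[OF infsum_tendsto[OF l2_inner_summable[OF v assms(2)]]]) (use e in auto)
  note ev2 = eventually_tail_small[OF assms(2) d(1)]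
  obtain F where F: "finite F" "l2norm (f - restr F f) < d" "dist (\<Sum>x\<in>F. cnj (v x) * f x) (l2_inner v f) < e/2"
    using eventually_happens'[OF _ eventually_conj[OF ev2 ev1]] by auto
  have rl2: "restr F f \<in> l2" by (rule restr_finite_l2[OF F(1)])
  have t: "f - restr F f \<in> l2" by (rule l2_normsq_tail_le(1)[OF assms(2) F(1)])
  have "l2_inner h (mat_apply m f) - l2_inner h (mat_apply m (restr F f)) = l2_inner h (mat_apply m (f - restr F f))"
    using l2_inner_diff_right[OF assms(3) bounded_mat_apply(1)[OF assms(1,2)] bounded_mat_apply(1)[OF assms(1) rl2]]
      mat_apply_diff[OF assms(1,2) rl2] by simp
  then have "cmod (l2_inner h (mat_apply m f) - l2_inner h (mat_apply m (restr F f))) \<le> l2norm h * l2norm (mat_apply m (f - restr F f))"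
    using l2_inner_cauchy_schwarz[OF assms(3) bounded_mat_apply(1)[OF assms(1) t]] by simp
  also have "\<dots> \<le> l2norm h * (opnorm m * l2norm (f - restr F f))"
    by (intro mult_left_mono bounded_mat_apply(2)[OF assms(1) t] l2norm_nonneg)
  also have "\<dots> = K * l2norm (f - restr F f)" unfolding K_def by simp
  also have "\<dots> \<le> K * d" using F(2) K0 by (intro mult_left_mono) auto
  finally have p1: "cmod (l2_inner h (mat_apply m f) - l2_inner h (mat_apply m (restr F f))) \<le> e/2" using d by simp
  have "l2_inner h (mat_apply m (restr F f)) = (\<Sum>x\<in>F. cnj (v x) * f x)"
    unfolding l2_inner_mat_apply_restr[OF assms(1,3) F(1)] v_def by (simp add: mult.commute)
  then have p2: "cmod (l2_inner h (mat_apply m (restr F f)) - l2_inner v f) < e/2" using F(3) by (simp add: dist_norm)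
  have "cmod (l2_inner h (mat_apply m f) - l2_inner v f) \<le> cmod (l2_inner h (mat_apply m f) - l2_inner h (mat_apply m (restr F f))) + cmod (l2_inner h (mat_apply m (restr F f)) - l2_inner v f)"
    using norm_triangle_ineq[of "l2_inner h (mat_apply m f) - l2_inner h (mat_apply m (restr F f))" "l2_inner h (mat_apply m (restr F f)) - l2_inner v f"] by simp
  then show "cmod (l2_inner h (mat_apply m f) - l2_inner (mat_apply (mat_adj m) h) f) \<le> e"
    using p1 p2 unfolding v_def by simp
qed

definition gram :: "('b \<Rightarrow> 'a \<Rightarrow> complex) \<Rightarrow> ('a \<Rightarrow> 'a \<Rightarrow> complex)" where
  "gram A = mat_mult (mat_adj A) A"

lemma mat_adj_adj[simp]: "mat_adj (mat_adj A) = A"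
  unfolding mat_adj_def by simp

lemma gram_entry: "gram A i j = l2_inner (\<lambda>l. A l i) (\<lambda>l. A l j)"
  unfolding gram_def mat_mult_def mat_adj_def l2_inner_def ..

lemma gram_eq_adjoint_column:
  assumes "bounded_mat A"
  shows "gram A i j = cnj (mat_apply (mat_adj A) (\<lambda>l. A l i) j)"
proof -
  have "gram A i j = l2_inner (\<lambda>l. A l i) (mat_apply A (unit_vec j))"
    unfolding gram_entry mat_apply_unit_vec ..
  also have "\<dots> = l2_inner (mat_apply (mat_adj A) (\<lambda>l. A l i)) (unit_vec j)"
    by (rule l2_inner_adjoint[OF assms unit_vec_l2(1) column_l2(1)[OF assms]])
  finally show ?thesis by (simp add: l2_inner_unit_vec)
qed

lemma gram_apply:
  assumes "bounded_mat A" "f \<in> l2"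
  shows "mat_apply (gram A) f = mat_apply (mat_adj A) (mat_apply A f)"
proof (rule ext)
  fix i
  have "mat_apply (gram A) f i = l2_inner (mat_apply (mat_adj A) (\<lambda>l. A l i)) f"
    unfolding mat_apply_def l2_inner_def gram_eq_adjoint_column[OF assms(1)] ..
  also have "\<dots> = l2_inner (\<lambda>l. A l i) (mat_apply A f)"
    by (rule l2_inner_adjoint[OF assms(1,2) column_l2(1)[OF assms(1)], symmetric])
  also have "\<dots> = mat_apply (mat_adj A) (mat_apply A f) i"
    unfolding l2_inner_def mat_apply_def mat_adj_def ..
  finally show "mat_apply (gram A) f i = mat_apply (mat_adj A) (mat_apply A f) i" .
qed

lemma bounded_mat_gram:
  assumes "bounded_mat A"
  shows "bounded_mat (gram A)" "opnorm (gram A) \<le> (opnorm A)^2"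
proof -
  have sm: "(\<lambda>x. gram A i x * f x) summable_on UNIV" if "f \<in> l2" for f i
    unfolding gram_eq_adjoint_column[OF assms]
    by (rule l2_cauchy_schwarz_prod(1)[OF l2_cnj[OF adjoint_apply_l2(1)[OF assms column_l2(1)[OF assms]]] that])
  have a: "mat_apply (gram A) f \<in> l2" "l2norm (mat_apply (gram A) f) \<le> (opnorm A)^2 * l2norm f" if f: "f \<in> l2" for f
  proof -
    have Af: "mat_apply A f \<in> l2" by (rule bounded_mat_apply(1)[OF assms f])
    show "mat_apply (gram A) f \<in> l2" unfolding gram_apply[OF assms f] by (rule adjoint_apply_l2(1)[OF assms Af])
    have "l2norm (mat_apply (gram A) f) \<le> opnorm A * l2norm (mat_apply A f)"
      unfolding gram_apply[OF assms f] by (rule adjoint_apply_l2(2)[OF assms Af])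
    also have "\<dots> \<le> opnorm A * (opnorm A * l2norm f)"
      by (intro mult_left_mono bounded_mat_apply(2)[OF assms f] opnorm_nonneg[OF assms])
    finally show "l2norm (mat_apply (gram A) f) \<le> (opnorm A)^2 * l2norm f" by (simp add: power2_eq_square)
  qed
  show "bounded_mat (gram A)" "opnorm (gram A) \<le> (opnorm A)^2"
    using bounded_matI[OF sm a(1) a(2)] by auto
qed

lemma l2_inner_gram:
  assumes "bounded_mat A" "f \<in> l2"
  shows "l2_inner f (mat_apply (gram A) f) = complex_of_real (l2_normsq (mat_apply A f))"
proof -
  have Af: "mat_apply A f \<in> l2" by (rule bounded_mat_apply(1)[OF assms])
  have "l2_inner f (mat_apply (gram A) f) = l2_inner f (mat_apply (mat_adj A) (mat_apply A f))"
    unfolding gram_apply[OF assms] ..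
  also have "\<dots> = l2_inner (mat_apply (mat_adj (mat_adj A)) f) (mat_apply A f)"
    by (rule l2_inner_adjoint[OF bounded_mat_adj(1)[OF assms(1)] Af assms(2)])
  also have "\<dots> = complex_of_real (l2_normsq (mat_apply A f))" by (simp add: l2_inner_self[OF Af])
  finally show ?thesis .
qed

lemma sum_l2_normsq_le_opnorm_gram_sum:
  assumes "finite I" "\<And>n. n \<in> I \<Longrightarrow> bounded_mat (A n)" "f \<in> l2"
  shows "(\<Sum>n\<in>I. l2_normsq (mat_apply (A n) f)) \<le> opnorm (\<Sum>n\<in>I. gram (A n)) * l2_normsq f"
proof -
  have bg: "bounded_mat (gram (A n))" if "n \<in> I" for n by (rule bounded_mat_gram(1)[OF assms(2)[OF that]])
  note bs = bounded_mat_sum[of I "\<lambda>n. gram (A n)", OF bg]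
  have "complex_of_real (\<Sum>n\<in>I. l2_normsq (mat_apply (A n) f)) = (\<Sum>n\<in>I. l2_inner f (mat_apply (gram (A n)) f))"
    unfolding of_real_sum by (rule sum.cong[OF refl]) (use l2_inner_gram[OF assms(2) assms(3)] in simp)
  also have "\<dots> = l2_inner f (\<Sum>n\<in>I. mat_apply (gram (A n)) f)"
    by (rule l2_inner_sum_right[symmetric, OF assms(3) _ assms(1)]) (use bounded_mat_apply(1)[OF bg assms(3)] in blast)
  also have "\<dots> = l2_inner f (mat_apply (\<Sum>n\<in>I. gram (A n)) f)" using bs assms(3) by simp
  finally have eq: "complex_of_real (\<Sum>n\<in>I. l2_normsq (mat_apply (A n) f)) = l2_inner f (mat_apply (\<Sum>n\<in>I. gram (A n)) f)" .
  have nn: "0 \<le> (\<Sum>n\<in>I. l2_normsq (mat_apply (A n) f))" by (simp add: sum_nonneg l2_normsq_nonneg)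
  have "(\<Sum>n\<in>I. l2_normsq (mat_apply (A n) f)) = cmod (complex_of_real (\<Sum>n\<in>I. l2_normsq (mat_apply (A n) f)))"
    by (simp only: norm_of_real abs_of_nonneg[OF nn])
  also have "\<dots> \<le> l2norm f * l2norm (mat_apply (\<Sum>n\<in>I. gram (A n)) f)"
    unfolding eq by (rule l2_inner_cauchy_schwarz[OF assms(3) bounded_mat_apply(1)]) (use bs assms(3) in auto)
  also have "\<dots> \<le> l2norm f * (opnorm (\<Sum>n\<in>I. gram (A n)) * l2norm f)"
    by (intro mult_left_mono bounded_mat_apply(2) l2norm_nonneg) (use bs assms(3) in auto)
  also have "\<dots> = opnorm (\<Sum>n\<in>I. gram (A n)) * l2_normsq f" by (simp add: l2norm_power2[symmetric] power2_eq_square)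
  finally show ?thesis .
qed

section \<open>Slices\<close>

lemma slice_apply: "mat_apply (slice T n) f l = mat_apply T f (n, l)"
  unfolding mat_apply_def slice_def ..

lemma slice_diff: "slice (A - B) n = slice A n - slice B n"
  unfolding slice_def by (rule ext, rule ext) simp

lemma bounded_mat_slice:
  assumes "bounded_mat T"
  shows "bounded_mat (slice T n)" "opnorm (slice T n) \<le> opnorm T"
proof -
  have sm: "(\<lambda>x. slice T n l x * f x) summable_on UNIV" if "f \<in> l2" for f l
    unfolding slice_def by (rule bounded_mat_row_summable[OF assms that])
  have app: "mat_apply (slice T n) f = (\<lambda>l. mat_apply T f (n, l))" for f
    by (rule ext) (rule slice_apply)
  have inj: "inj (Pair n)" by (auto simp: inj_def)
  have a: "mat_apply (slice T n) f \<in> l2" "l2norm (mat_apply (slice T n) f) \<le> opnorm T * l2norm f" if f: "f \<in> l2" for f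
    unfolding app using l2_reindex[OF inj bounded_mat_apply(1)[OF assms f]] bounded_mat_apply(2)[OF assms f]
    by (meson order_trans)+
  show "bounded_mat (slice T n)" "opnorm (slice T n) \<le> opnorm T"
    using bounded_matI[OF sm a(1) a(2) opnorm_nonneg[OF assms]] by auto
qed

definition tail_rows :: "nat \<Rightarrow> (nat \<times> nat \<Rightarrow> nat \<Rightarrow> complex) \<Rightarrow> (nat \<times> nat \<Rightarrow> nat \<Rightarrow> complex)" where
  "tail_rows N T = rowcut {y. N \<le> fst y} T"

lemma sum_gram_slices:
  assumes "bounded_mat (T :: nat \<times> nat \<Rightarrow> nat \<Rightarrow> complex)"
  shows "(\<Sum>n<N. gram (slice T n)) = gram T - gram (tail_rows N T)"
proof (rule ext, rule ext)
  fix i j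
  define h where "h y = cnj (T y i) * T y j" for y
  have hs: "h summable_on UNIV" unfolding h_def
    by (rule l2_cauchy_schwarz_prod(1)[OF l2_cnj[OF column_l2(1)[OF assms]] column_l2(1)[OF assms]])
  define A where "A = {y::nat\<times>nat. fst y < N}"
  define B where "B = {y::nat\<times>nat. N \<le> fst y}"
  have AB: "A \<union> B = UNIV" "A \<inter> B = {}" by (auto simp: A_def B_def)
  have hA: "h summable_on A" by (rule summable_on_subset_banach[OF hs]) auto
  have hB: "h summable_on B" by (rule summable_on_subset_banach[OF hs]) auto
  have g1: "gram T i j = infsum h A + infsum h B"
  proof -
    have "gram T i j = infsum h UNIV" unfolding gram_entry l2_inner_def h_def ..
    also have "\<dots> = infsum h (A \<union> B)" by (simp only: AB(1))
    also have "\<dots> = infsum h A + infsum h B" by (rule infsum_Un_disjoint[OF hA hB AB(2)])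
    finally show ?thesis .
  qed
  have g2: "gram (tail_rows N T) i j = infsum h B"
    unfolding gram_entry l2_inner_def tail_rows_def rowcut_def
    by (rule infsum_cong_neutral) (auto simp: B_def h_def)
  have ASig: "A = Sigma {..<N} (\<lambda>_. UNIV)" by (auto simp: A_def)
  have g3: "(\<Sum>n<N. gram (slice T n)) i j = infsum h A"
  proof -
    have "(\<Sum>n<N. gram (slice T n)) i j = (\<Sum>n<N. infsum (\<lambda>l. h (n, l)) UNIV)"
      unfolding sum_mat_entry gram_entry l2_inner_def slice_def h_def ..
    also have "\<dots> = infsum (\<lambda>n. infsum (\<lambda>l. h (n, l)) UNIV) {..<N}" by simp
    also have "\<dots> = infsum h (Sigma {..<N} (\<lambda>_. UNIV))"
      by (rule infsum_Sigma_banach) (use hA ASig in simp)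
    finally show ?thesis using ASig by simp
  qed
  show "(\<Sum>n<N. gram (slice T n)) i j = (gram T - gram (tail_rows N T)) i j"
    using g1 g2 g3 by simp
qed

lemma bounded_mat_if_slices_bounded:
  fixes T :: "nat \<times> nat \<Rightarrow> nat \<Rightarrow> complex"
  assumes sb: "\<And>n. bounded_mat (slice T n)"
    and bnd: "\<And>f N. f \<in> l2 \<Longrightarrow> (\<Sum>n<N. l2_normsq (mat_apply (slice T n) f)) \<le> B^2 * l2_normsq f"
    and B: "0 \<le> B"
  shows "bounded_mat T" "opnorm T \<le> B"
proof -
  have sm: "(\<lambda>x. T y x * f x) summable_on UNIV" if "f \<in> l2" for f y
    using bounded_mat_row_summable[OF sb[of "fst y"] that, of "snd y"] by (simp add: slice_def)
  have fin: "(\<Sum>y\<in>G. (cmod (mat_apply T f y))^2) \<le> (B * l2norm f)^2" if f: "f \<in> l2" and G: "finite G" for f G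
  proof -
    define N where "N = Suc (Max (fst ` G))"
    have sub: "fst ` G \<subseteq> {..<N}"
    proof
      fix n assume n: "n \<in> fst ` G"
      then have "n \<le> Max (fst ` G)" using G by (intro Max_ge) auto
      then show "n \<in> {..<N}" by (simp add: N_def)
    qed
    have "(\<Sum>y\<in>G. (cmod (mat_apply T f y))^2) = (\<Sum>n\<in>fst ` G. \<Sum>y\<in>{y\<in>G. fst y = n}. (cmod (mat_apply T f y))^2)"
      by (rule sum.image_gen[OF G])
    also have "\<dots> \<le> (\<Sum>n\<in>fst ` G. l2_normsq (mat_apply (slice T n) f))"
    proof (rule sum_mono)
      fix n assume "n \<in> fst ` G"
      have inj: "inj_on snd {y\<in>G. fst y = n}" by (auto simp: inj_on_def prod_eq_iff)
      have "(\<Sum>l\<in>snd ` {y\<in>G. fst y = n}. (cmod (mat_apply (slice T n) f l))^2) = (\<Sum>y\<in>{y\<in>G. fst y = n}. (cmod (mat_apply (slice T n) f (snd y)))^2)"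
        by (simp add: sum.reindex[OF inj])
      also have "\<dots> = (\<Sum>y\<in>{y\<in>G. fst y = n}. (cmod (mat_apply T f y))^2)"
        by (rule sum.cong) (auto simp: slice_apply)
      finally have eq: "(\<Sum>y\<in>{y\<in>G. fst y = n}. (cmod (mat_apply T f y))^2) = (\<Sum>l\<in>snd ` {y\<in>G. fst y = n}. (cmod (mat_apply (slice T n) f l))^2)" by simp
      show "(\<Sum>y\<in>{y\<in>G. fst y = n}. (cmod (mat_apply T f y))^2) \<le> l2_normsq (mat_apply (slice T n) f)"
        unfolding eq by (rule sum_sq_le_l2_normsq[OF bounded_mat_apply(1)[OF sb f]]) (use G in auto)
    qed
    also have "\<dots> \<le> (\<Sum>n<N. l2_normsq (mat_apply (slice T n) f))"
      by (rule sum_mono2) (use sub in \<open>auto simp: l2_normsq_nonneg\<close>)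
    also have "\<dots> \<le> B^2 * l2_normsq f" by (rule bnd[OF f])
    also have "\<dots> = (B * l2norm f)^2" by (simp add: power_mult_distrib l2norm_power2)
    finally show ?thesis .
  qed
  have a: "mat_apply T f \<in> l2" "l2norm (mat_apply T f) \<le> B * l2norm f" if "f \<in> l2" for f
    using l2norm_le_if_sum_sq_le[of "mat_apply T f" "B * l2norm f"] fin[OF that] B l2norm_nonneg[of f] by auto
  show "bounded_mat T" "opnorm T \<le> B"
    using bounded_matI[OF sm a(1) a(2) B] by auto
qed

lemma opnorm_le_if_slices_small:
  fixes T :: "nat \<times> nat \<Rightarrow> nat \<Rightarrow> complex"
  assumes sb: "\<And>n. bounded_mat (slice T n)"
    and head: "\<And>n. n < N \<Longrightarrow> opnorm (slice T n) \<le> \<delta>"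
    and tail: "\<And>f M. f \<in> l2 \<Longrightarrow> (\<Sum>n\<in>{N..<M}. l2_normsq (mat_apply (slice T n) f)) \<le> c * l2_normsq f"
    and c: "0 \<le> c" and \<delta>: "0 \<le> \<delta>"
  shows "opnorm T \<le> sqrt (real N * \<delta>^2 + c)"
proof (rule bounded_mat_if_slices_bounded(2)[OF sb])
  fix f :: "nat \<Rightarrow> complex" and M assume f: "f \<in> l2"
  define g where "g n = l2_normsq (mat_apply (slice T n) f)" for n
  have "g n \<le> \<delta>^2 * l2_normsq f" if "n < N" for n
  proof -
    have "g n = (l2norm (mat_apply (slice T n) f))^2" by (simp add: g_def l2norm_power2)
    also have "\<dots> \<le> (\<delta> * l2norm f)^2"
    proof -
      have "l2norm (mat_apply (slice T n) f) \<le> opnorm (slice T n) * l2norm f"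
        by (rule bounded_mat_apply(2)[OF sb f])
      also have "\<dots> \<le> \<delta> * l2norm f" by (intro mult_right_mono head[OF that] l2norm_nonneg)
      finally show ?thesis by (intro power_mono l2norm_nonneg)
    qed
    finally show ?thesis by (simp add: power_mult_distrib l2norm_power2)
  qed
  then have "(\<Sum>n\<in>{0..<N}. g n) \<le> real N * \<delta>^2 * l2_normsq f"
    using sum_mono[of "{0..<N}" g "\<lambda>_. \<delta>^2 * l2_normsq f"] by simp
  moreover have "(\<Sum>n<M. g n) \<le> (\<Sum>n\<in>{0..<N}. g n) + (\<Sum>n\<in>{N..<max M N}. g n)"
  proof -
    have "(\<Sum>n<M. g n) \<le> (\<Sum>n<max M N. g n)" by (rule sum_mono2) (auto simp: g_def l2_normsq_nonneg)
    also have "\<dots> = (\<Sum>n\<in>{0..<N}. g n) + (\<Sum>n\<in>{N..<max M N}. g n)"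
      unfolding lessThan_atLeast0 by (rule sum.atLeastLessThan_concat[symmetric]) auto
    finally show ?thesis .
  qed
  moreover have "(\<Sum>n\<in>{N..<max M N}. g n) \<le> c * l2_normsq f" unfolding g_def by (rule tail[OF f])
  ultimately show "(\<Sum>n<M. l2_normsq (mat_apply (slice T n) f)) \<le> (sqrt (real N * \<delta>^2 + c))^2 * l2_normsq f"
    using c by (simp add: g_def algebra_simps)
qed (use c in simp)

definition gram_psum :: "(nat \<times> nat \<Rightarrow> nat \<Rightarrow> complex) \<Rightarrow> nat \<Rightarrow> (nat \<Rightarrow> nat \<Rightarrow> complex)" where
  "gram_psum T N = (\<Sum>n<N. gram (slice T n))"

lemma gram_psum_unfold: "(\<Sum>n<N. mat_mult (mat_adj (slice T n)) (slice T n)) = gram_psum T N"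
  unfolding gram_psum_def gram_def ..

lemma bounded_mat_gram_psum: "(\<And>n. bounded_mat (slice T n)) \<Longrightarrow> bounded_mat (gram_psum T N)"
  unfolding gram_psum_def using bounded_mat_sum[of "{..<N}" "\<lambda>n. gram (slice T n)"] bounded_mat_gram(1) by blast

lemma gram_psum_diff:
  assumes "N \<le> M"
  shows "gram_psum T M - gram_psum T N = (\<Sum>n\<in>{N..<M}. gram (slice T n))"
  unfolding gram_psum_def lessThan_atLeast0 using sum_diff_nat_ivl[of 0 N M] assms by simp

lemma sum_l2_normsq_slices_le:
  fixes T :: "nat \<times> nat \<Rightarrow> nat \<Rightarrow> complex"
  assumes sb: "\<And>n. bounded_mat (slice T n)" and f: "f \<in> l2" and NM: "N \<le> M"
  shows "(\<Sum>n\<in>{N..<M}. l2_normsq (mat_apply (slice T n) f)) \<le> opnorm (gram_psum T M - gram_psum T N) * l2_normsq f"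
  unfolding gram_psum_diff[OF NM] by (rule sum_l2_normsq_le_opnorm_gram_sum[OF _ sb f]) auto

lemma opnorm_gram_psum_diff_le:
  assumes "bounded_mat K"
  shows "opnorm (gram_psum K N - gram K) \<le> (opnorm (tail_rows N K))^2"
proof -
  have bc: "bounded_mat (tail_rows N K)"
    unfolding tail_rows_def by (rule bounded_mat_rowcut(1)[OF assms])
  have "gram_psum K N - gram K = - gram (tail_rows N K)"
    unfolding gram_psum_def sum_gram_slices[OF assms] by simp
  then show ?thesis
    using bounded_mat_uminus(2)[OF bounded_mat_gram(1)[OF bc]] bounded_mat_gram(2)[OF bc] by simp
qed

lemma opnorm_gram_psum_le:
  assumes bD: "bounded_mat D"
  shows "opnorm (gram_psum D N) \<le> 2 * (opnorm D)^2"
proof -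
  have bc: "bounded_mat (tail_rows N D)" "opnorm (tail_rows N D) \<le> opnorm D"
    unfolding tail_rows_def using bounded_mat_rowcut[OF bD] by auto
  have "opnorm (gram_psum D N) = opnorm (gram D - gram (tail_rows N D))"
    unfolding gram_psum_def sum_gram_slices[OF bD] ..
  also have "\<dots> \<le> opnorm (gram D) + opnorm (gram (tail_rows N D))"
    by (rule bounded_mat_diff(2)[OF bounded_mat_gram(1)[OF bD] bounded_mat_gram(1)[OF bc(1)]])
  also have "\<dots> \<le> (opnorm D)^2 + (opnorm D)^2"
  proof -
    have "opnorm (gram (tail_rows N D)) \<le> (opnorm (tail_rows N D))^2" by (rule bounded_mat_gram(2)[OF bc(1)])
    also have "\<dots> \<le> (opnorm D)^2" by (intro power_mono bc(2) opnorm_nonneg bc(1))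
    finally show ?thesis using bounded_mat_gram(2)[OF bD] by simp
  qed
  finally show ?thesis by simp
qed

lemma gram_psum_tail_small:
  fixes T :: "nat \<times> nat \<Rightarrow> nat \<Rightarrow> complex"
  assumes sb: "\<And>n. bounded_mat (slice T n)" and S: "bounded_mat S"
    and lim: "(\<lambda>N. opnorm (gram_psum T N - S)) \<longlonglongrightarrow> 0" and e: "e > 0"
  obtains N0 where "\<And>N M f. N0 \<le> N \<Longrightarrow> f \<in> l2 \<Longrightarrow>
    (\<Sum>n\<in>{N..<M}. l2_normsq (mat_apply (slice T n) f)) \<le> e * l2_normsq f"
proof -
  have pb: "bounded_mat (gram_psum T N)" for N by (rule bounded_mat_gram_psum[OF sb])
  have "\<exists>N0. \<forall>N\<ge>N0. opnorm (gram_psum T N - S) < e / 2"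
    using LIMSEQ_D[OF lim, of "e/2"] e by (metis abs_ge_self diff_zero half_gt_zero le_less_trans real_norm_def)
  then obtain N0 where N0: "\<And>N. N \<ge> N0 \<Longrightarrow> opnorm (gram_psum T N - S) < e / 2" by blast
  have "(\<Sum>n\<in>{N..<M}. l2_normsq (mat_apply (slice T n) f)) \<le> e * l2_normsq f"
    if N: "N \<ge> N0" and f: "f \<in> l2" for N M f
  proof (cases "N \<le> M")
    case False
    then show ?thesis using e by (simp add: l2_normsq_nonneg)
  next
    case True
    have "opnorm (gram_psum T M - S) + opnorm (S - gram_psum T N) \<le> e"
      using N0[of M] N0[of N] N True opnorm_diff_commute[OF S pb] by simp
    then have "opnorm (gram_psum T M - gram_psum T N) \<le> e"
      using opnorm_triangle[OF pb S pb, of M N] by linarith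
    with sum_l2_normsq_slices_le[OF sb f True] show ?thesis
      by (meson l2_normsq_nonneg mult_right_mono order_trans)
  qed
  then show ?thesis using that by blast
qed

lemma bounded_mat_if_gram_psum_converges:
  fixes T :: "nat \<times> nat \<Rightarrow> nat \<Rightarrow> complex"
  assumes sb: "\<And>n. bounded_mat (slice T n)" and S: "bounded_mat S"
    and lim: "(\<lambda>N. opnorm (gram_psum T N - S)) \<longlonglongrightarrow> 0"
  shows "bounded_mat T"
proof -
  obtain N0 where N0: "\<And>N M f. N0 \<le> N \<Longrightarrow> f \<in> l2 \<Longrightarrow>
      (\<Sum>n\<in>{N..<M}. l2_normsq (mat_apply (slice T n) f)) \<le> 1 * l2_normsq f"
    using gram_psum_tail_small[OF sb S lim, of 1] by auto
  define B where "B = opnorm (gram_psum T N0) + 1"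
  have B: "0 \<le> B" unfolding B_def using opnorm_nonneg[OF bounded_mat_gram_psum[OF sb]] by simp
  have "(\<Sum>n<N. l2_normsq (mat_apply (slice T n) f)) \<le> (sqrt B)^2 * l2_normsq f" if f: "f \<in> l2" for f N
  proof -
    define g where "g n = l2_normsq (mat_apply (slice T n) f)" for n
    have "(\<Sum>n<N. g n) \<le> (\<Sum>n<max N N0. g n)"
      by (rule sum_mono2) (auto simp: g_def l2_normsq_nonneg)
    also have "\<dots> = (\<Sum>n\<in>{0..<N0}. g n) + (\<Sum>n\<in>{N0..<max N N0}. g n)"
      unfolding lessThan_atLeast0 by (rule sum.atLeastLessThan_concat[symmetric]) auto
    also have "(\<Sum>n\<in>{0..<N0}. g n) \<le> opnorm (gram_psum T N0 - gram_psum T 0) * l2_normsq f"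
      unfolding g_def by (rule sum_l2_normsq_slices_le[OF sb f]) simp
    also have "(\<Sum>n\<in>{N0..<max N N0}. g n) \<le> 1 * l2_normsq f"
      unfolding g_def by (rule N0[OF _ f]) simp
    finally show ?thesis using B by (simp add: g_def gram_psum_def B_def algebra_simps)
  qed
  then show ?thesis by (rule bounded_mat_if_slices_bounded(1)[OF sb _ real_sqrt_ge_zero[OF B]])
qed

section \<open>Compact and finitely supported matrices\<close>

lemma compact_mat_bounded: "compact_mat m \<Longrightarrow> bounded_mat m" unfolding compact_mat_def by (elim conjE)

lemma compact_matE:
  assumes "compact_mat m" "e > 0"
  obtains F where "finite F" "F \<subseteq> l2" "\<And>f. f \<in> l2 \<Longrightarrow> l2norm f \<le> 1 \<Longrightarrow> \<exists>g\<in>F. l2norm (mat_apply m f - g) < e"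
proof -
  from assms(1)[unfolded compact_mat_def] have h: "\<forall>e>0. \<exists>F. finite F \<and> F \<subseteq> l2 \<and>
        (\<forall>f\<in>l2. l2norm f \<le> 1 \<longrightarrow> (\<exists>g\<in>F. l2norm (mat_apply m f - g) < e))" by (rule conjunct2)
  from h[rule_format, OF assms(2)] obtain F where F: "finite F" "F \<subseteq> l2"
    "\<forall>f\<in>l2. l2norm f \<le> 1 \<longrightarrow> (\<exists>g\<in>F. l2norm (mat_apply m f - g) < e)" by (elim exE conjE)
  show ?thesis by (rule that[OF F(1) F(2)]) (use F(3) in blast)
qed

definition fin_supp :: "('b \<Rightarrow> 'a \<Rightarrow> complex) \<Rightarrow> bool" where
  "fin_supp A \<longleftrightarrow> (\<exists>R C. finite R \<and> finite C \<and> (\<forall>y x. A y x \<noteq> 0 \<longrightarrow> y \<in> R \<and> x \<in> C))"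

definition fin_supp_approx :: "('b \<Rightarrow> 'a \<Rightarrow> complex) \<Rightarrow> bool" where
  "fin_supp_approx m \<longleftrightarrow> (\<forall>e>0. \<exists>A. fin_supp A \<and> opnorm (m - A) < e)"

lemma fin_supp_approxD:
  assumes "fin_supp_approx m" "e > 0"
  obtains A where "fin_supp A" "opnorm (m - A) < e"
  using assms unfolding fin_supp_approx_def by blast

lemma bounded_mat_fin_supp:
  assumes "fin_supp A"
  shows "bounded_mat A"
proof -
  obtain R C where RC: "finite R" "finite C" "\<And>y x. A y x \<noteq> 0 \<Longrightarrow> y \<in> R \<and> x \<in> C"
    using assms unfolding fin_supp_def by blast
  define E where
    "E p = (\<lambda>y x. if x = snd p then (if y = fst p then A (fst p) (snd p) else 0) else 0)" for p
  have "bounded_mat (E p)" for p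
  proof -
    have "(\<Sum>y\<in>G. (cmod (if y = fst p then A (fst p) (snd p) else 0))^2) \<le> (cmod (A (fst p) (snd p)))^2"
      if "finite G" for G
    proof -
      have "(\<Sum>y\<in>G. (cmod (if y = fst p then A (fst p) (snd p) else 0))^2)
          = (\<Sum>y\<in>G. if y = fst p then (cmod (A (fst p) (snd p)))^2 else 0)"
        by (rule sum.cong) auto
      also have "\<dots> \<le> (cmod (A (fst p) (snd p)))^2" using that by (simp add: sum.delta)
      finally show ?thesis .
    qed
    then show ?thesis
      unfolding E_def by (intro bounded_mat_sparse(1)[of "\<lambda>_. snd p"]) auto
  qed
  moreover have "A = (\<Sum>p\<in>R \<times> C. E p)"
  proof (intro ext)
    fix y x
    have "(\<Sum>p\<in>R \<times> C. E p y x) = (\<Sum>p\<in>R \<times> C. if p = (y, x) then A y x else 0)"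
      by (rule sum.cong) (auto simp: E_def)
    also have "\<dots> = A y x" using RC by (auto simp: sum.delta')
    finally show "A y x = (\<Sum>p\<in>R \<times> C. E p) y x" by (simp add: sum_mat_entry)
  qed
  ultimately show ?thesis using bounded_mat_sum[of "R \<times> C" E] by auto
qed

lemma fin_supp_rowcut_colcut: "finite R \<Longrightarrow> finite C \<Longrightarrow> fin_supp (rowcut R (colcut C m))"
  unfolding fin_supp_def rowcut_def colcut_def by (intro exI[of _ R] exI[of _ C]) auto

lemma fin_supp_slice: "fin_supp F \<Longrightarrow> fin_supp (slice F n)"
proof -
  assume "fin_supp F"
  then obtain R C where RC: "finite R" "finite C" "\<And>y x. F y x \<noteq> 0 \<Longrightarrow> y \<in> R \<and> x \<in> C"
    unfolding fin_supp_def by blast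
  have "\<And>l x. F (n, l) x \<noteq> 0 \<Longrightarrow> l \<in> snd ` R \<and> x \<in> C" using RC(3) by force
  then show "fin_supp (slice F n)" unfolding fin_supp_def slice_def using RC(1,2) by blast
qed

lemma fin_supp_stack_slices:
  fixes A :: "nat \<Rightarrow> 'b \<Rightarrow> 'a \<Rightarrow> complex"
  assumes "\<And>n. n < N \<Longrightarrow> fin_supp (A n)"
  shows "fin_supp (\<lambda>y x. if fst y < N then A (fst y) (snd y) x else 0)"
proof -
  have "\<forall>n\<in>{..<N}. \<exists>RC. finite (fst RC) \<and> finite (snd RC) \<and>
      (\<forall>l x. A n l x \<noteq> 0 \<longrightarrow> l \<in> fst RC \<and> x \<in> snd RC)"
    using assms unfolding fin_supp_def by force
  from bchoice[OF this] obtain RC where RC: "\<forall>n\<in>{..<N}. finite (fst (RC n)) \<and>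
      finite (snd (RC n)) \<and> (\<forall>l x. A n l x \<noteq> 0 \<longrightarrow> l \<in> fst (RC n) \<and> x \<in> snd (RC n))"
    by blast
  show ?thesis unfolding fin_supp_def
  proof (intro exI conjI allI impI)
    show "finite (\<Union>n<N. Pair n ` fst (RC n))" by (rule finite_UN_I) (use RC in auto)
    show "finite (\<Union>n<N. snd (RC n))" by (rule finite_UN_I) (use RC in auto)
    fix y x assume "(if fst y < N then A (fst y) (snd y) x else 0) \<noteq> 0"
    then have y: "fst y < N" "A (fst y) (snd y) x \<noteq> 0" by (auto split: if_splits)
    with RC have "snd y \<in> fst (RC (fst y))" "x \<in> snd (RC (fst y))" by auto
    with y(1) show "y \<in> (\<Union>n<N. Pair n ` fst (RC n))" "x \<in> (\<Union>n<N. snd (RC n))"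
      by (auto intro!: bexI[of _ "fst y"] image_eqI[of y _ "snd y"])
  qed
qed

definition round_grid :: "real \<Rightarrow> complex \<Rightarrow> complex" where
  "round_grid s z = complex_of_real (s * of_int (round (Re z / s)))
    + \<i> * complex_of_real (s * of_int (round (Im z / s)))"

lemma abs_diff_round_grid_le:
  fixes x s :: real
  assumes "s > 0"
  shows "\<bar>x - s * of_int (round (x / s))\<bar> \<le> s / 2"
proof -
  have "x - s * of_int (round (x / s)) = s * (x / s - of_int (round (x / s)))"
    using assms by (simp add: algebra_simps)
  then have "\<bar>x - s * of_int (round (x / s))\<bar> = s * \<bar>of_int (round (x / s)) - x / s\<bar>"
    using assms by (simp add: abs_mult abs_minus_commute)
  also have "\<dots> \<le> s * (1/2)" using of_int_round_abs_le assms by (intro mult_left_mono) auto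
  finally show ?thesis by simp
qed

lemma norm_diff_round_grid_le:
  assumes "s > 0"
  shows "cmod (z - round_grid s z) \<le> s"
proof -
  have "cmod (z - round_grid s z) \<le> \<bar>Re (z - round_grid s z)\<bar> + \<bar>Im (z - round_grid s z)\<bar>"
    by (rule cmod_le)
  also have "\<dots> \<le> s/2 + s/2"
    using abs_diff_round_grid_le[OF assms, of "Re z"] abs_diff_round_grid_le[OF assms, of "Im z"]
    by (simp add: round_grid_def)
  finally show ?thesis by simp
qed

lemma round_div_bounded:
  fixes x s B :: real
  assumes "s > 0" "\<bar>x\<bar> \<le> B"
  shows "round (x / s) \<in> {- (\<lceil>B / s\<rceil> + 1) .. \<lceil>B / s\<rceil> + 1}"
proof -
  have "\<bar>of_int (round (x / s)) - x / s\<bar> \<le> 1/2" by (rule of_int_round_abs_le)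
  moreover have "\<bar>x / s\<bar> \<le> B / s" using assms by (simp add: abs_divide divide_right_mono)
  moreover have "B / s \<le> of_int \<lceil>B / s\<rceil>" by (rule le_of_int_ceiling)
  ultimately have "\<bar>real_of_int (round (x / s))\<bar> \<le> of_int \<lceil>B / s\<rceil> + 1" by linarith
  then show ?thesis by auto
qed

lemma finite_net_bounded_vecs:
  fixes R :: "'a set"
  assumes R: "finite R" and e: "e > 0"
  obtains Fs where "finite Fs" "Fs \<subseteq> l2"
    "\<And>v. (\<And>y. y \<notin> R \<Longrightarrow> v y = 0) \<Longrightarrow> (\<And>y. cmod (v y) \<le> B) \<Longrightarrow> \<exists>g\<in>Fs. l2norm (v - g) < e"
proof -
  define s where "s = e / (2 * (real (card R) + 1))"
  have s0: "s > 0" using e by (simp add: s_def)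
  define M where "M = \<lceil>B / s\<rceil> + 1"
  define V where "V = (\<lambda>(a, b). complex_of_real (s * of_int a) + \<i> * complex_of_real (s * of_int b))
    ` ({-M..M} \<times> {-M..M})"
  define Fs where "Fs = (\<lambda>h. restr R h) ` (PiE R (\<lambda>_. V))"
  have "finite Fs" unfolding Fs_def V_def by (intro finite_imageI finite_PiE R) simp
  moreover have Fs: "Fs \<subseteq> l2" unfolding Fs_def using restr_finite_l2[OF R] by blast
  moreover have "\<exists>g\<in>Fs. l2norm (v - g) < e"
    if v0: "\<And>y. y \<notin> R \<Longrightarrow> v y = 0" and vB: "\<And>y. cmod (v y) \<le> B" for v
  proof -
    define g where "g = restr R (\<lambda>y. round_grid s (v y))"
    have "round_grid s (v y) \<in> V" for y
    proof -
      have "round (Re (v y) / s) \<in> {-M..M}" "round (Im (v y) / s) \<in> {-M..M}"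
        unfolding M_def using abs_Re_le_cmod[of "v y"] abs_Im_le_cmod[of "v y"] vB[of y]
        by (intro round_div_bounded[OF s0]; linarith)+
      then show ?thesis unfolding V_def round_grid_def
        by (intro image_eqI[of _ _ "(round (Re (v y) / s), round (Im (v y) / s))"]) auto
    qed
    then have "restrict (\<lambda>y. round_grid s (v y)) R \<in> PiE R (\<lambda>_. V)" by auto
    moreover have "restr R (restrict (\<lambda>y. round_grid s (v y)) R) = g"
      unfolding g_def restr_def by auto
    ultimately have gF: "g \<in> Fs" unfolding Fs_def by (metis image_eqI)
    have "l2norm (v - g) \<le> (real (card R) + 1) * s"
    proof (rule l2norm_le_if_sum_sq_le(2))
      fix G :: "'a set" assume G: "finite G"
      have "(\<Sum>y\<in>G. (cmod ((v - g) y))^2) = (\<Sum>y\<in>G \<inter> R. (cmod ((v - g) y))^2)"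
        by (rule sum.mono_neutral_right) (use G v0 in \<open>auto simp: g_def restr_def\<close>)
      also have "\<dots> \<le> (\<Sum>y\<in>G \<inter> R. s^2)"
        by (intro sum_mono power_mono) (auto simp: g_def restr_def norm_diff_round_grid_le[OF s0])
      also have "\<dots> \<le> (\<Sum>y\<in>R. s^2)" by (rule sum_mono2) (use R in auto)
      also have "\<dots> \<le> ((real (card R) + 1) * s)^2"
        using s0 by (simp add: power_mult_distrib power2_eq_square algebra_simps)
      finally show "(\<Sum>y\<in>G. (cmod ((v - g) y))^2) \<le> ((real (card R) + 1) * s)^2" .
    qed (use s0 in simp)
    also have "\<dots> < e" using e by (simp add: s_def field_simps add_pos_nonneg)
    finally show ?thesis using gF by blast
  qed
  ultimately show ?thesis using that by blast
qed

lemma compact_mat_fin_supp: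
  assumes "fin_supp A"
  shows "compact_mat A"
  unfolding compact_mat_def
proof (intro conjI allI impI)
  show bA: "bounded_mat A" by (rule bounded_mat_fin_supp[OF assms])
  fix e :: real assume e: "e > 0"
  obtain R C where RC: "finite R" "\<And>y x. A y x \<noteq> 0 \<Longrightarrow> y \<in> R"
    using assms unfolding fin_supp_def by blast
  obtain Fs where Fs: "finite Fs" "Fs \<subseteq> l2" "\<And>v. (\<And>y. y \<notin> R \<Longrightarrow> v y = 0) \<Longrightarrow>
      (\<And>y. cmod (v y) \<le> opnorm A) \<Longrightarrow> \<exists>g\<in>Fs. l2norm (v - g) < e"
    using finite_net_bounded_vecs[OF RC(1) e] by blast
  have "\<exists>g\<in>Fs. l2norm (mat_apply A f - g) < e" if f: "f \<in> l2" "l2norm f \<le> 1" for f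
  proof (rule Fs(3))
    show "mat_apply A f y = 0" if "y \<notin> R" for y
      unfolding mat_apply_def by (rule infsum_0) (metis RC(2) that mult_zero_left)
    fix y
    have "cmod (mat_apply A f y) \<le> l2norm (mat_apply A f)"
      by (rule norm_entry_le_l2norm[OF bounded_mat_apply(1)[OF bA f(1)]])
    also have "\<dots> \<le> opnorm A * l2norm f" by (rule bounded_mat_apply(2)[OF bA f(1)])
    also have "\<dots> \<le> opnorm A" using f(2) opnorm_nonneg[OF bA] by (simp add: mult_left_le)
    finally show "cmod (mat_apply A f y) \<le> opnorm A" .
  qed
  then show "\<exists>F. finite F \<and> F \<subseteq> l2 \<and> (\<forall>f\<in>l2. l2norm f \<le> 1 \<longrightarrow> (\<exists>g\<in>F. l2norm (mat_apply A f - g) < e))"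
    using Fs(1,2) by blast
qed

lemma compact_mat_if_approx:
  assumes bm: "bounded_mat m" and ap: "\<And>e. e > 0 \<Longrightarrow> \<exists>A. compact_mat A \<and> opnorm (m - A) < e"
  shows "compact_mat m"
  unfolding compact_mat_def
proof (intro conjI allI impI bm)
  fix e :: real assume e: "e > 0"
  obtain A where A: "compact_mat A" "opnorm (m - A) < e / 2" using ap[of "e/2"] e by auto
  have bA: "bounded_mat A" by (rule compact_mat_bounded[OF A(1)])
  have bmA: "bounded_mat (m - A)" by (rule bounded_mat_diff(1)[OF bm bA])
  obtain F where F: "finite F" "F \<subseteq> l2"
    "\<And>f. f \<in> l2 \<Longrightarrow> l2norm f \<le> 1 \<Longrightarrow> \<exists>g\<in>F. l2norm (mat_apply A f - g) < e / 2"
    using compact_matE[OF A(1), of "e/2"] e by auto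
  have "\<exists>g\<in>F. l2norm (mat_apply m f - g) < e" if f: "f \<in> l2" "l2norm f \<le> 1" for f
  proof -
    obtain g where g: "g \<in> F" "l2norm (mat_apply A f - g) < e / 2" using F(3)[OF f] by blast
    have "l2norm (mat_apply m f - mat_apply A f) \<le> opnorm (m - A) * l2norm f"
      using bounded_mat_apply(2)[OF bmA f(1)] by (simp add: mat_apply_diff_mat[OF bm bA f(1)])
    also have "\<dots> \<le> opnorm (m - A)" using f(2) opnorm_nonneg[OF bmA] by (simp add: mult_left_le)
    finally have "l2norm (mat_apply m f - mat_apply A f) < e / 2" using A(2) by simp
    moreover have "l2norm (mat_apply m f - g)
        \<le> l2norm (mat_apply m f - mat_apply A f) + l2norm (mat_apply A f - g)"
      using g(1) F(2) bounded_mat_apply(1)[OF bm f(1)] bounded_mat_apply(1)[OF bA f(1)]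
      by (intro l2norm_triangle_diff) auto
    ultimately have "l2norm (mat_apply m f - g) < e" using g(2) by linarith
    then show ?thesis using g(1) by blast
  qed
  then show "\<exists>F. finite F \<and> F \<subseteq> l2 \<and> (\<forall>f\<in>l2. l2norm f \<le> 1 \<longrightarrow> (\<exists>g\<in>F. l2norm (mat_apply m f - g) < e))"
    using F(1,2) by blast
qed

lemma compact_mat_rowcut_approx:
  fixes m :: "'b \<Rightarrow> 'a \<Rightarrow> complex"
  assumes cm: "compact_mat m" and e: "e > 0"
  obtains R where "finite R" "opnorm (m - rowcut R m) \<le> e"
proof -
  have bm: "bounded_mat m" by (rule compact_mat_bounded[OF cm])
  obtain F where F: "finite F" "F \<subseteq> l2"
    "\<And>f. f \<in> l2 \<Longrightarrow> l2norm f \<le> 1 \<Longrightarrow> \<exists>g\<in>F. l2norm (mat_apply m f - g) < e/2"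
    using compact_matE[OF cm, of "e/2"] e by auto
  obtain R where R: "finite R" "\<And>g. g \<in> F \<Longrightarrow> l2norm (g - restr R g) < e/2"
    using finite_set_tails_small[OF F(1,2), of "e/2"] e by auto
  have brm: "bounded_mat (rowcut R m)" by (rule bounded_mat_rowcut(1)[OF bm])
  have "opnorm (m - rowcut R m) \<le> e"
  proof (rule opnorm_le_if_unit_ball_bounded)
    fix f :: "'a \<Rightarrow> complex" assume f: "f \<in> l2" "l2norm f \<le> 1"
    have mf: "mat_apply m f \<in> l2" by (rule bounded_mat_apply(1)[OF bm f(1)])
    obtain g where g: "g \<in> F" "l2norm (mat_apply m f - g) < e/2" using F(3)[OF f] by blast
    have gl2: "g \<in> l2" using g(1) F(2) by blast
    have d: "mat_apply m f - g \<in> l2" by (rule l2_diff(1)[OF mf gl2])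
    have "mat_apply (m - rowcut R m) f
        = ((mat_apply m f - g) - restr R (mat_apply m f - g)) + (g - restr R g)"
      unfolding mat_apply_diff_mat[OF bm brm f(1)] rowcut_apply restr_diff by (rule ext) simp
    then have "l2norm (mat_apply (m - rowcut R m) f)
        \<le> l2norm ((mat_apply m f - g) - restr R (mat_apply m f - g)) + l2norm (g - restr R g)"
      using l2_add(2)[OF l2norm_tail_le(1)[OF d] l2norm_tail_le(1)[OF gl2]] by simp
    also have "\<dots> \<le> l2norm (mat_apply m f - g) + e/2"
      using l2norm_tail_le(2)[OF d, of R] R(2)[OF g(1)] by linarith
    also have "\<dots> \<le> e" using g(2) by simp
    finally show "l2norm (mat_apply (m - rowcut R m) f) \<le> e" .
  qed (use e in simp)
  then show ?thesis using R(1) that by blast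
qed

text \<open>Write |m u|^2 = \<langle>m u - g, m u\<rangle> + \<langle>m^* g, u\<rangle>; as u vanishes on C, only the part of m^* g
outside C enters the second term.\<close>

lemma l2_normsq_apply_le_adjoint_tail:
  assumes bm: "bounded_mat m" and u: "u \<in> l2" "\<And>x. x \<in> C \<Longrightarrow> u x = 0" and g: "g \<in> l2"
  defines "w \<equiv> mat_apply (mat_adj m) g"
  shows "l2_normsq (mat_apply m u)
    \<le> l2norm (mat_apply m u - g) * l2norm (mat_apply m u) + l2norm (w - restr C w) * l2norm u"
proof -
  define v where "v = mat_apply m u"
  have vl2: "v \<in> l2" unfolding v_def by (rule bounded_mat_apply(1)[OF bm u(1)])
  have wl2: "w \<in> l2" unfolding w_def by (rule adjoint_apply_l2(1)[OF bm g])
  have "l2_inner (restr C w) u = 0"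
    unfolding l2_inner_def by (rule infsum_0) (simp add: restr_def u(2))
  then have "l2_inner g v = l2_inner (w - restr C w) u"
    using l2_inner_adjoint[OF bm u(1) g] l2_inner_diff_left[OF wl2 restr_l2(1)[OF wl2] u(1)]
    by (simp add: v_def w_def)
  moreover have "complex_of_real (l2_normsq v) = l2_inner (v - g) v + l2_inner g v"
    using l2_inner_self[OF vl2] l2_inner_diff_left[OF vl2 g vl2] by simp
  ultimately have "complex_of_real (l2_normsq v) = l2_inner (v - g) v + l2_inner (w - restr C w) u"
    by simp
  moreover have "l2_normsq v = cmod (complex_of_real (l2_normsq v))"
    using l2_normsq_nonneg[of v] by simp
  ultimately have "l2_normsq v = cmod (l2_inner (v - g) v + l2_inner (w - restr C w) u)" by simp
  also have "\<dots> \<le> cmod (l2_inner (v - g) v) + cmod (l2_inner (w - restr C w) u)"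
    by (rule norm_triangle_ineq)
  also have "\<dots> \<le> l2norm (v - g) * l2norm v + l2norm (w - restr C w) * l2norm u"
    using l2_inner_cauchy_schwarz[OF l2_diff(1)[OF vl2 g] vl2]
      l2_inner_cauchy_schwarz[OF l2norm_tail_le(1)[OF wl2] u(1)] by (rule add_mono)
  finally show ?thesis unfolding v_def .
qed

lemma compact_mat_colcut_approx:
  fixes m :: "'b \<Rightarrow> 'a \<Rightarrow> complex"
  assumes cm: "compact_mat m" and e: "e > 0"
  obtains C where "finite C" "opnorm (m - colcut C m) \<le> e"
proof -
  have bm: "bounded_mat m" by (rule compact_mat_bounded[OF cm])
  define K where "K = opnorm m"
  have K0: "0 \<le> K" unfolding K_def by (rule opnorm_nonneg[OF bm])
  define d where "d = e^2 / (K + 1)"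
  have d0: "d > 0" using e K0 by (simp add: d_def)
  obtain F where F: "finite F" "F \<subseteq> l2"
    "\<And>f. f \<in> l2 \<Longrightarrow> l2norm f \<le> 1 \<Longrightarrow> \<exists>g\<in>F. l2norm (mat_apply m f - g) < d"
    using compact_matE[OF cm d0] by auto
  define w where "w g = mat_apply (mat_adj m) g" for g
  have "w ` F \<subseteq> l2" unfolding w_def using adjoint_apply_l2(1)[OF bm] F(2) by blast
  then obtain C where C: "finite C" "\<And>h. h \<in> w ` F \<Longrightarrow> l2norm (h - restr C h) < d"
    using finite_set_tails_small[OF finite_imageI[OF F(1)] _ d0] by blast
  have bcm: "bounded_mat (colcut C m)" by (rule bounded_mat_colcut(1)[OF bm])
  have "opnorm (m - colcut C m) \<le> e"
  proof (rule opnorm_le_if_unit_ball_bounded)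
    fix f :: "'a \<Rightarrow> complex" assume f: "f \<in> l2" "l2norm f \<le> 1"
    define u where "u = f - restr C f"
    have ul2: "u \<in> l2" unfolding u_def by (rule l2norm_tail_le(1)[OF f(1)])
    have un: "l2norm u \<le> 1" unfolding u_def using l2norm_tail_le(2)[OF f(1), of C] f(2) by simp
    have u0: "u x = 0" if "x \<in> C" for x using that by (simp add: u_def restr_def)
    have eq: "mat_apply (m - colcut C m) f = mat_apply m u"
      unfolding mat_apply_diff_mat[OF bm bcm f(1)] colcut_apply u_def
        mat_apply_diff[OF bm f(1) restr_l2(1)[OF f(1)]] ..
    define v where "v = mat_apply m u"
    have vn: "l2norm v \<le> K"
    proof -
      have "l2norm v \<le> K * l2norm u" unfolding v_def K_def by (rule bounded_mat_apply(2)[OF bm ul2])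
      also have "\<dots> \<le> K" using un K0 by (simp add: mult_left_le)
      finally show ?thesis .
    qed
    obtain g where g: "g \<in> F" "l2norm (v - g) < d" using F(3)[OF ul2 un] unfolding v_def by blast
    have gl2: "g \<in> l2" using g(1) F(2) by blast
    have "l2_normsq v \<le> l2norm (v - g) * l2norm v + l2norm (w g - restr C (w g)) * l2norm u"
      unfolding v_def w_def by (rule l2_normsq_apply_le_adjoint_tail[OF bm ul2 u0 gl2])
    also have "\<dots> \<le> d * K + d * 1"
      using g(2) vn C(2)[OF imageI[OF g(1)]] un d0 by (intro add_mono mult_mono) (auto simp: l2norm_nonneg)
    also have "\<dots> = d * (K + 1)" by (simp add: algebra_simps)
    also have "\<dots> = e^2" unfolding d_def using K0 by simp
    finally have "sqrt (l2_normsq v) \<le> sqrt (e^2)" by (rule real_sqrt_le_mono)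
    then show "l2norm (mat_apply (m - colcut C m) f) \<le> e"
      unfolding eq using e by (simp add: l2norm_eq_sqrt v_def)
  qed (use e in simp)
  then show ?thesis using C(1) that by blast
qed

lemma fin_supp_approx_if_compact_mat:
  fixes m :: "'b \<Rightarrow> 'a \<Rightarrow> complex"
  assumes cm: "compact_mat m"
  shows "fin_supp_approx m"
  unfolding fin_supp_approx_def
proof (intro allI impI)
  fix e :: real assume e: "e > 0"
  have bm: "bounded_mat m" by (rule compact_mat_bounded[OF cm])
  obtain R where R: "finite R" "opnorm (m - rowcut R m) \<le> e/3"
    using compact_mat_rowcut_approx[OF cm, of "e/3"] e by auto
  obtain C where C: "finite C" "opnorm (m - colcut C m) \<le> e/3"
    using compact_mat_colcut_approx[OF cm, of "e/3"] e by auto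
  have eq: "m - rowcut R (colcut C m) = (m - rowcut R m) + rowcut R (m - colcut C m)"
    unfolding rowcut_def colcut_def by (rule ext, rule ext) simp
  have b1: "bounded_mat (m - rowcut R m)" by (rule bounded_mat_diff(1)[OF bm bounded_mat_rowcut(1)[OF bm]])
  have b2': "bounded_mat (m - colcut C m)" by (rule bounded_mat_diff(1)[OF bm bounded_mat_colcut(1)[OF bm]])
  have b2: "bounded_mat (rowcut R (m - colcut C m))" by (rule bounded_mat_rowcut(1)[OF b2'])
  have "opnorm (m - rowcut R (colcut C m)) \<le> opnorm (m - rowcut R m) + opnorm (rowcut R (m - colcut C m))"
    unfolding eq by (rule bounded_mat_add(2)[OF b1 b2])
  also have "\<dots> < e" using R(2) C(2) bounded_mat_rowcut(2)[OF b2', of R] e by linarith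
  finally show "\<exists>A. fin_supp A \<and> opnorm (m - A) < e"
    using fin_supp_rowcut_colcut[OF R(1) C(1)] by blast
qed

lemma compact_mat_iff_fin_supp_approx:
  "compact_mat m \<longleftrightarrow> bounded_mat m \<and> fin_supp_approx m"
proof
  assume m: "bounded_mat m \<and> fin_supp_approx m"
  show "compact_mat m"
  proof (rule compact_mat_if_approx)
    fix e :: real assume "e > 0"
    then obtain A where "fin_supp A" "opnorm (m - A) < e" using m fin_supp_approxD by blast
    then show "\<exists>A. compact_mat A \<and> opnorm (m - A) < e" using compact_mat_fin_supp by blast
  qed (use m in blast)
qed (use compact_mat_bounded fin_supp_approx_if_compact_mat in blast)

section \<open>The operator spaces l2(K(H_X)) and l2(D(H_X))'_0\<close>

lemma compact_slice_if_fin_supp_approx: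
  assumes bK: "bounded_mat K" and ap: "fin_supp_approx K"
  shows "compact_mat (slice K n)"
  unfolding compact_mat_iff_fin_supp_approx fin_supp_approx_def
proof (intro conjI allI impI bounded_mat_slice(1)[OF bK])
  fix e :: real assume e: "e > 0"
  obtain F where F: "fin_supp F" "opnorm (K - F) < e" using fin_supp_approxD[OF ap e] by blast
  have bKF: "bounded_mat (K - F)" by (rule bounded_mat_diff(1)[OF bK bounded_mat_fin_supp[OF F(1)]])
  have "opnorm (slice K n - slice F n) \<le> opnorm (K - F)"
    unfolding slice_diff[symmetric] by (rule bounded_mat_slice(2)[OF bKF])
  then show "\<exists>A. fin_supp A \<and> opnorm (slice K n - A) < e"
    using F fin_supp_slice[OF F(1), of n] by (intro exI[of _ "slice F n"]) auto
qed

lemma gram_psum_tendsto_if_fin_supp_approx: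
  assumes bK: "bounded_mat K" and ap: "fin_supp_approx K"
  shows "(\<lambda>N. opnorm (gram_psum K N - gram K)) \<longlonglongrightarrow> 0"
proof (rule LIMSEQ_I)
  fix r :: real assume r: "0 < r"
  define e where "e = min 1 (r / 2)"
  have e: "e > 0" "e^2 < r" using r by (auto simp: e_def power2_eq_square min_def)
  obtain F where F: "fin_supp F" "opnorm (K - F) < e" using fin_supp_approxD[OF ap e(1)] by blast
  obtain R C where RC: "finite R" "\<And>y x. F y x \<noteq> 0 \<Longrightarrow> y \<in> R"
    using F(1) unfolding fin_supp_def by blast
  define N0 where "N0 = Suc (Max (fst ` R))"
  have fR: "fst y < N0" if "y \<in> R" for y
  proof -
    have "fst y \<le> Max (fst ` R)" using RC(1) that by (intro Max_ge) auto
    then show ?thesis by (simp add: N0_def)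
  qed
  have bKF: "bounded_mat (K - F)" by (rule bounded_mat_diff(1)[OF bK bounded_mat_fin_supp[OF F(1)]])
  have "norm (opnorm (gram_psum K N - gram K) - 0) < r" if N: "N \<ge> N0" for N
  proof -
    have "tail_rows N K = tail_rows N (K - F)"
    proof (intro ext)
      fix y x
      show "tail_rows N K y x = tail_rows N (K - F) y x"
        using RC(2)[of y x] fR[of y] N by (cases "F y x = 0") (auto simp: tail_rows_def rowcut_def)
    qed
    then have bc: "bounded_mat (tail_rows N K)" "opnorm (tail_rows N K) \<le> opnorm (K - F)"
      unfolding tail_rows_def using bounded_mat_rowcut[OF bKF] by auto
    have "opnorm (gram_psum K N - gram K) \<le> (opnorm (tail_rows N K))^2"
      by (rule opnorm_gram_psum_diff_le[OF bK])
    also have "\<dots> \<le> e^2" using bc(2) F(2) by (intro power_mono opnorm_nonneg[OF bc(1)]) auto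
    finally have "opnorm (gram_psum K N - gram K) < r" using e by simp
    moreover have "0 \<le> opnorm (gram_psum K N - gram K)"
      using bounded_mat_slice(1)[OF bK]
      by (intro opnorm_nonneg bounded_mat_diff(1) bounded_mat_gram_psum bounded_mat_gram(1)[OF bK])
    ultimately show ?thesis by simp
  qed
  then show "\<exists>no. \<forall>n\<ge>no. norm (opnorm (gram_psum K n - gram K) - 0) < r" by blast
qed

lemma l2_compact_if_fin_supp_approx:
  assumes "bounded_mat K" "fin_supp_approx K"
  shows "K \<in> l2_compact"
  unfolding l2_compact_def mem_Collect_eq gram_psum_unfold
  using compact_slice_if_fin_supp_approx[OF assms] bounded_mat_gram(1)[OF assms(1)]
    gram_psum_tendsto_if_fin_supp_approx[OF assms] by blast

lemma fin_supp_approx_if_l2_compact: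
  assumes "K \<in> l2_compact"
  shows "fin_supp_approx K"
  unfolding fin_supp_approx_def
proof (intro allI impI)
  fix e :: real assume e: "e > 0"
  from assms obtain S where sc: "\<And>n. compact_mat (slice K n)" and S: "bounded_mat S"
    and lim: "(\<lambda>N. opnorm (gram_psum K N - S)) \<longlonglongrightarrow> 0"
    unfolding l2_compact_def gram_psum_unfold by auto
  have sb: "bounded_mat (slice K n)" for n by (rule compact_mat_bounded[OF sc])
  obtain N where N: "\<And>N' M f. N \<le> N' \<Longrightarrow> f \<in> l2 \<Longrightarrow>
      (\<Sum>n\<in>{N'..<M}. l2_normsq (mat_apply (slice K n) f)) \<le> e^2/4 * l2_normsq f"
    using gram_psum_tail_small[OF sb S lim, of "e^2/4"] e by auto
  define \<delta> where "\<delta> = e / (2 * (real N + 1))"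
  have \<delta>: "\<delta> > 0" using e by (simp add: \<delta>_def)
  have "\<forall>n. \<exists>A. fin_supp A \<and> opnorm (slice K n - A) < \<delta>"
    using fin_supp_approx_if_compact_mat[OF sc] \<delta> unfolding fin_supp_approx_def by blast
  from choice[OF this] obtain A
    where A: "\<And>n. fin_supp (A n)" "\<And>n. opnorm (slice K n - A n) < \<delta>" by blast
  define F where "F y x = (if fst y < N then A (fst y) (snd y) x else 0)" for y x
  have "fin_supp F" unfolding F_def by (rule fin_supp_stack_slices[OF A(1)])
  have sl: "slice (K - F) n = (if n < N then slice K n - A n else slice K n)" for n
    unfolding slice_def F_def by (rule ext, rule ext) simp
  have "opnorm (K - F) \<le> sqrt (real N * \<delta>^2 + e^2/4)"
  proof (rule opnorm_le_if_slices_small)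
    show "bounded_mat (slice (K - F) n)" for n
      unfolding sl using sb bounded_mat_diff(1)[OF sb bounded_mat_fin_supp[OF A(1)]] by simp
    show "opnorm (slice (K - F) n) \<le> \<delta>" if "n < N" for n using A(2)[of n] that sl by simp
    show "(\<Sum>n\<in>{N..<M}. l2_normsq (mat_apply (slice (K - F) n) f)) \<le> e^2/4 * l2_normsq f"
      if "f \<in> l2" for f M using N[OF order_refl that, of M] by (simp add: sl)
  qed (use \<delta> in auto)
  also have "\<dots> < e"
  proof -
    have "real N \<le> (real N + 1)^2" by (simp add: power2_eq_square algebra_simps)
    then have "real N / (real N + 1)^2 \<le> 1" by (simp add: divide_le_eq)
    then have "e^2/4 * (real N / (real N + 1)^2) \<le> e^2/4"
      by (intro mult_left_le) simp_all
    moreover have "real N * \<delta>^2 = e^2/4 * (real N / (real N + 1)^2)"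
      unfolding \<delta>_def by (simp add: power_divide power_mult_distrib field_simps power2_eq_square algebra_simps)
    moreover have "0 < e^2" using e by simp
    ultimately have "real N * \<delta>^2 + e^2/4 < e^2" by linarith
    then have "sqrt (real N * \<delta>^2 + e^2/4) < sqrt (e^2)" by (rule real_sqrt_less_mono)
    then show ?thesis using e by simp
  qed
  finally show "\<exists>F. fin_supp F \<and> opnorm (K - F) < e" using \<open>fin_supp F\<close> by blast
qed

lemma l2_compact_iff_fin_supp_approx:
  "K \<in> l2_compact \<longleftrightarrow> bounded_mat K \<and> fin_supp_approx K"
proof
  assume K: "K \<in> l2_compact"
  then obtain S where "\<And>n. compact_mat (slice K n)" "bounded_mat S"
    "(\<lambda>N. opnorm (gram_psum K N - S)) \<longlonglongrightarrow> 0"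
    unfolding l2_compact_def gram_psum_unfold by auto
  then have "bounded_mat K" using bounded_mat_if_gram_psum_converges compact_mat_bounded by blast
  then show "bounded_mat K \<and> fin_supp_approx K" using fin_supp_approx_if_l2_compact[OF K] by blast
next
  assume "bounded_mat K \<and> fin_supp_approx K"
  then show "K \<in> l2_compact" by (intro l2_compact_if_fin_supp_approx) auto
qed

text \<open>In 0-based indices the band consists of the entries T (n, l) l with n \<le> l.\<close>

definition band :: "(nat \<times> nat \<Rightarrow> nat \<Rightarrow> complex) \<Rightarrow> (nat \<times> nat \<Rightarrow> nat \<Rightarrow> complex)" where
  "band T = (\<lambda>y x. if x = snd y then (if fst y \<le> snd y then T y (snd y) else 0) else 0)"

lemma bounded_mat_band:
  assumes bT: "bounded_mat T"
  shows "bounded_mat (band T)" "opnorm (band T) \<le> opnorm T"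
proof -
  define c where "c y = (if fst y \<le> snd y then T y (snd y) else 0)" for y
  have e: "band T = (\<lambda>y x. if x = snd y then c y else 0)" unfolding band_def c_def ..
  have bnd: "(\<Sum>y\<in>G. (cmod (c y))^2) \<le> (opnorm T)^2" if G: "finite G" "G \<subseteq> {y. snd y = x}" for x G
  proof -
    have "(\<Sum>y\<in>G. (cmod (c y))^2) \<le> (\<Sum>y\<in>G. (cmod (T y x))^2)"
      by (rule sum_mono) (use G(2) in \<open>auto simp: c_def\<close>)
    also have "\<dots> \<le> l2_normsq (\<lambda>y. T y x)" by (rule sum_sq_le_l2_normsq[OF column_l2(1)[OF bT] G(1)])
    also have "\<dots> = (l2norm (\<lambda>y. T y x))^2" by (simp add: l2norm_power2)
    also have "\<dots> \<le> (opnorm T)^2" by (intro power_mono column_l2(2)[OF bT] l2norm_nonneg)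
    finally show ?thesis .
  qed
  show "bounded_mat (band T)" "opnorm (band T) \<le> opnorm T"
    unfolding e using bounded_mat_sparse[of snd c "opnorm T", OF bnd opnorm_nonneg[OF bT]] by auto
qed

lemma band_diff: "band (A - B) = band A - band B"
  unfolding band_def by (rule ext, rule ext) simp

lemma band_in_l2_diag0:
  assumes bT: "bounded_mat T"
  shows "band T \<in> l2_diag0"
proof -
  have bD: "bounded_mat (band T)" by (rule bounded_mat_band(1)[OF bT])
  have "diag_mat (slice (band T) n)" for n
    unfolding diag_mat_def using bounded_mat_slice(1)[OF bD, of n] by (auto simp: slice_def band_def)
  moreover have "\<forall>n j. j < n \<longrightarrow> band T (n, j) j = 0" by (auto simp: band_def)
  moreover have "\<exists>C. \<forall>N. opnorm (\<Sum>n<N. mat_mult (mat_adj (slice (band T) n)) (slice (band T) n)) \<le> C"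
    unfolding gram_psum_unfold using opnorm_gram_psum_le[OF bD] by blast
  ultimately show ?thesis unfolding l2_diag0_def by blast
qed

lemma l2_diag0_bounded:
  assumes "D \<in> l2_diag0"
  shows "bounded_mat D"
proof -
  from assms have sd: "\<And>n. diag_mat (slice D n)"
    and C: "\<exists>C. \<forall>N. opnorm (gram_psum D N) \<le> C"
    unfolding l2_diag0_def gram_psum_unfold by auto
  obtain C where C: "\<And>N. opnorm (gram_psum D N) \<le> C" using C by blast
  have sb: "bounded_mat (slice D n)" for n using sd[of n] unfolding diag_mat_def by blast
  have bnd: "(\<Sum>n<N. l2_normsq (mat_apply (slice D n) f)) \<le> (sqrt (max C 0))^2 * l2_normsq f" if f: "f \<in> l2" for f N
  proof -
    have "(\<Sum>n<N. l2_normsq (mat_apply (slice D n) f)) \<le> opnorm (\<Sum>n<N. gram (slice D n)) * l2_normsq f"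
      by (rule sum_l2_normsq_le_opnorm_gram_sum[OF _ sb f]) simp
    also have "\<dots> \<le> max C 0 * l2_normsq f"
      using C[of N] by (intro mult_right_mono l2_normsq_nonneg) (simp add: gram_psum_def)
    finally show ?thesis by simp
  qed
  show ?thesis
  proof (rule bounded_mat_if_slices_bounded(1)[where B = "sqrt (max C 0)", OF sb])
    fix f :: "nat \<Rightarrow> complex" and N assume "f \<in> l2"
    then show "(\<Sum>n<N. l2_normsq (mat_apply (slice D n) f)) \<le> (sqrt (max C 0))^2 * l2_normsq f" by (rule bnd)
  next
    show "0 \<le> sqrt (max C 0)" by simp
  qed
qed

lemma l2_diag0_support:
  assumes "D \<in> l2_diag0" "D y x \<noteq> 0"
  shows "x = snd y \<and> fst y \<le> snd y"
proof -
  obtain n l where y: "y = (n, l)" by (cases y)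
  from assms(1) have sd: "\<And>n. diag_mat (slice D n)" and z: "\<And>n j. j < n \<Longrightarrow> D (n, j) j = 0"
    unfolding l2_diag0_def by auto
  have "x = l"
  proof (rule ccontr)
    assume "x \<noteq> l"
    then have "slice D n l x = 0" using sd[of n] unfolding diag_mat_def by auto
    then show False using assms(2) y by (simp add: slice_def)
  qed
  moreover have "n \<le> l"
  proof (rule ccontr)
    assume "\<not> n \<le> l"
    then have "D (n, l) l = 0" using z by simp
    then show False using assms(2) y \<open>x = l\<close> by simp
  qed
  ultimately show ?thesis using y by simp
qed

section \<open>Finite propagation\<close>

lemma dXY_eq:
  "dXY j (n, l) = (if n \<le> l then \<bar>real ((Suc j)^2) - real ((Suc l)^2)\<bar> + 1
                   else real ((Suc j)^2) + real ((Suc l)^2 + Suc n))"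
proof -
  define p where "p = xpt0 (Suc j)"
  define q where "q = xpt (Suc n) (Suc l)"
  have "dXY j (n, l) = infsum (\<lambda>i. \<bar>p i - q i\<bar>) UNIV"
    unfolding dXY_def l1dist_def p_def q_def by simp
  also have "\<dots> = (\<Sum>i\<in>{0, Suc n}. \<bar>p i - q i\<bar>)"
    by (rule infsum_finite_support(1)) (auto simp: p_def q_def xpt0_def xpt_def)
  also have "\<dots> = \<bar>p 0 - q 0\<bar> + \<bar>p (Suc n) - q (Suc n)\<bar>" by simp
  finally show ?thesis by (auto simp: p_def q_def xpt0_def xpt_def)
qed

lemma dXY_diag: "n \<le> j \<Longrightarrow> dXY j (n, j) = 1"
  by (simp add: dXY_eq)

lemma dXY_nonneg: "0 \<le> dXY j y"
  by (cases y) (simp add: dXY_eq)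

lemma sq_gap:
  fixes j l :: nat
  assumes "j < l"
  shows "(Suc j)^2 + Suc l \<le> (Suc l)^2"
proof -
  have "Suc (Suc j) \<le> Suc l" using assms by simp
  then have a: "Suc l * Suc (Suc j) \<le> Suc l * Suc l" by (rule mult_le_mono2)
  have b: "Suc j * Suc j \<le> Suc l * Suc j" using assms by (intro mult_le_mono1) simp
  have c: "Suc l * Suc (Suc j) = Suc l * Suc j + Suc l" by simp
  show ?thesis unfolding power2_eq_square using a b c by linarith
qed

lemma sq_gap_real:
  fixes j l :: nat
  assumes "j \<noteq> l"
  shows "real j < \<bar>real ((Suc j)^2) - real ((Suc l)^2)\<bar>" "real l < \<bar>real ((Suc j)^2) - real ((Suc l)^2)\<bar>"
proof -
  have "real j < \<bar>real ((Suc j)^2) - real ((Suc l)^2)\<bar> \<and> real l < \<bar>real ((Suc j)^2) - real ((Suc l)^2)\<bar>"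
  proof (cases "j < l")
    case True
    have "real ((Suc j)^2 + Suc l) \<le> real ((Suc l)^2)" using sq_gap[OF True] by linarith
    then show ?thesis using True by (simp only: of_nat_add) linarith
  next
    case False
    then have "l < j" using assms by simp
    have "real ((Suc l)^2 + Suc j) \<le> real ((Suc j)^2)" using sq_gap[OF \<open>l < j\<close>] by linarith
    then show ?thesis using \<open>l < j\<close> by (simp only: of_nat_add) linarith
  qed
  then show "real j < \<bar>real ((Suc j)^2) - real ((Suc l)^2)\<bar>" "real l < \<bar>real ((Suc j)^2) - real ((Suc l)^2)\<bar>" by auto
qed

lemma indices_lt_if_dXY_lt:
  assumes "dXY j (n, l) < L" "\<not> (j = l \<and> n \<le> l)"
  shows "real j < L" "real l < L" "real n < L"
proof -
  have "real j < L \<and> real l < L \<and> real n < L"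
  proof (cases "n \<le> l")
    case True
    then have jl: "j \<noteq> l" using assms(2) by auto
    have d: "dXY j (n, l) = \<bar>real ((Suc j)^2) - real ((Suc l)^2)\<bar> + 1" using True by (simp add: dXY_eq)
    show ?thesis using sq_gap_real[OF jl] assms(1) True unfolding d by auto
  next
    case False
    have d: "dXY j (n, l) = real ((Suc j)^2) + real ((Suc l)^2 + Suc n)" using False by (simp add: dXY_eq)
    have "real j \<le> real ((Suc j)^2)" "real l \<le> real ((Suc l)^2)"
      by (simp_all add: power2_eq_square)
    then show ?thesis using assms(1) unfolding d by auto
  qed
  then show "real j < L" "real l < L" "real n < L" by auto
qed

lemma nat_lt_ceil: "real k < L \<Longrightarrow> k < nat \<lceil>L\<rceil>"
  by linarith

lemma finite_prop_support:
  assumes "finite_prop S"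
  shows "\<exists>M. \<forall>y j. S y j \<noteq> 0 \<longrightarrow> \<not> (j = snd y \<and> fst y \<le> snd y) \<longrightarrow> fst y < M \<and> snd y < M \<and> j < M"
proof -
  obtain L where L: "\<And>j y. dXY j y \<ge> L \<Longrightarrow> S y j = 0" using assms unfolding finite_prop_def by blast
  have "fst y < nat \<lceil>L\<rceil> \<and> snd y < nat \<lceil>L\<rceil> \<and> j < nat \<lceil>L\<rceil>"
    if "S y j \<noteq> 0" "\<not> (j = snd y \<and> fst y \<le> snd y)" for y j
  proof -
    obtain n l where y: "y = (n, l)" by (cases y)
    have "dXY j (n, l) < L" using L[of j y] that(1) y by force
    then show ?thesis using indices_lt_if_dXY_lt[of j n l L] that(2) y by (auto intro: nat_lt_ceil)
  qed
  then show ?thesis by blast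
qed

lemma fin_supp_off_band_if_finite_prop:
  assumes "finite_prop S"
  shows "fin_supp (S - band S)"
proof -
  obtain M where M: "\<And>y j. S y j \<noteq> 0 \<Longrightarrow> \<not> (j = snd y \<and> fst y \<le> snd y) \<Longrightarrow>
      fst y < M \<and> snd y < M \<and> j < M"
    using finite_prop_support[OF assms] by blast
  show ?thesis unfolding fin_supp_def
  proof (intro exI conjI allI impI)
    show "finite ({..<M} \<times> {..<M})" "finite {..<M}" by simp_all
    fix y x assume "(S - band S) y x \<noteq> 0"
    then have "S y x \<noteq> 0" "\<not> (x = snd y \<and> fst y \<le> snd y)"
      by (auto simp: band_def split: if_splits)
    from M[OF this] show "y \<in> {..<M} \<times> {..<M}" "x \<in> {..<M}" by (cases y; simp)+
  qed
qed

lemma finite_prop_fin_supp_add_band: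
  assumes F: "fin_supp F" and D: "\<And>y x. D y x \<noteq> 0 \<Longrightarrow> x = snd y \<and> fst y \<le> snd y"
  shows "finite_prop (F + D)"
proof -
  obtain R C where RC: "finite R" "finite C" "\<And>y x. F y x \<noteq> 0 \<Longrightarrow> y \<in> R \<and> x \<in> C"
    using F unfolding fin_supp_def by blast
  define L where "L = 2 + (\<Sum>p\<in>C \<times> R. dXY (fst p) (snd p))"
  have "(F + D) y j = 0" if dL: "L \<le> dXY j y" for j y
  proof (rule ccontr)
    assume nz: "(F + D) y j \<noteq> 0"
    have sn: "0 \<le> (\<Sum>p\<in>C \<times> R. dXY (fst p) (snd p))" by (intro sum_nonneg dXY_nonneg)
    show False
    proof (cases "F y j = 0")
      case False
      then have "(j, y) \<in> C \<times> R" using RC(3) by auto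
      then have "dXY j y \<le> (\<Sum>p\<in>C \<times> R. dXY (fst p) (snd p))"
        using member_le_sum[of "(j, y)" "C \<times> R" "\<lambda>p. dXY (fst p) (snd p)"] RC(1,2) dXY_nonneg by auto
      then show False using dL unfolding L_def by simp
    next
      case True
      then have "j = snd y \<and> fst y \<le> snd y" using nz D[of y j] by simp
      then have "dXY j y = 1" by (cases y) (simp add: dXY_diag)
      then show False using dL sn unfolding L_def by simp
    qed
  qed
  then show ?thesis unfolding finite_prop_def by blast
qed

lemma fin_supp_approx_off_band_if_M_Yd:
  assumes "T \<in> M_Yd"
  shows "fin_supp_approx (T - band T)"
  unfolding fin_supp_approx_def
proof (intro allI impI)
  fix e :: real assume e: "e > 0"
  from assms have bT: "bounded_mat T" unfolding M_Yd_def by blast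
  have "\<exists>S. bounded_mat S \<and> finite_prop S \<and> opnorm (T - S) < e / 2"
    using assms e unfolding M_Yd_def mem_Collect_eq by (meson half_gt_zero)
  then obtain S where S: "bounded_mat S" "finite_prop S" "opnorm (T - S) < e / 2" by blast
  have bTS: "bounded_mat (T - S)" by (rule bounded_mat_diff(1)[OF bT S(1)])
  have eq: "T - band T - (S - band S) = (T - S) - band (T - S)"
    unfolding band_diff by (simp add: algebra_simps)
  have "opnorm (T - band T - (S - band S)) \<le> opnorm (T - S) + opnorm (band (T - S))"
    unfolding eq by (rule bounded_mat_diff(2)[OF bTS bounded_mat_band(1)[OF bTS]])
  also have "\<dots> < e" using bounded_mat_band(2)[OF bTS] S(3) by simp
  finally show "\<exists>F. fin_supp F \<and> opnorm (T - band T - F) < e"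
    using fin_supp_off_band_if_finite_prop[OF S(2)] by blast
qed

lemma add_mem_M_Yd:
  assumes K: "bounded_mat K" "fin_supp_approx K" and D: "D \<in> l2_diag0"
  shows "K + D \<in> M_Yd"
proof -
  have bD: "bounded_mat D" by (rule l2_diag0_bounded[OF D])
  have "\<exists>S. bounded_mat S \<and> finite_prop S \<and> opnorm (K + D - S) < e" if e: "e > 0" for e
  proof -
    obtain F where F: "fin_supp F" "opnorm (K - F) < e" using fin_supp_approxD[OF K(2) e] by blast
    have "bounded_mat (F + D)" by (rule bounded_mat_add(1)[OF bounded_mat_fin_supp[OF F(1)] bD])
    moreover have "finite_prop (F + D)"
      by (rule finite_prop_fin_supp_add_band[OF F(1) l2_diag0_support[OF D]])
    ultimately show ?thesis using F(2) by (intro exI[of _ "F + D"]) simp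
  qed
  then show ?thesis unfolding M_Yd_def using bounded_mat_add(1)[OF K(1) bD] by blast
qed

theorem mainTheorem11:
  shows "M_Yd = {K + D | K D. K \<in> l2_compact \<and> D \<in> l2_diag0}"
proof (intro equalityI subsetI)
  fix T assume T: "T \<in> M_Yd"
  then have bT: "bounded_mat T" unfolding M_Yd_def by blast
  have "T - band T \<in> l2_compact"
    unfolding l2_compact_iff_fin_supp_approx
    using bounded_mat_diff(1)[OF bT bounded_mat_band(1)[OF bT]] fin_supp_approx_off_band_if_M_Yd[OF T]
    by blast
  moreover have "band T \<in> l2_diag0" by (rule band_in_l2_diag0[OF bT])
  ultimately show "T \<in> {K + D | K D. K \<in> l2_compact \<and> D \<in> l2_diag0}"
    by (intro CollectI exI[of _ "T - band T"] exI[of _ "band T"]) simp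
next
  fix T assume "T \<in> {K + D | K D. K \<in> l2_compact \<and> D \<in> l2_diag0}"
  then show "T \<in> M_Yd" using add_mem_M_Yd l2_compact_iff_fin_supp_approx by blast
qed

end
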